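(* Assume $p_0\in(0,1)$, $p_j\in(0,1)$ and $\tau_j=\frac{p_0}{p_0+2(1-p_0)p_j}$ for $j=1,\dots,k$. Let $\Theta^0\in\mathbb R^{nd}$ be arbitrary, let $\xi^{(0)},\xi^{(1)},\dots$ be i.i.d. copies of $\xi$, and define iterates $\Theta^{t+1}=\Theta^t-\eta\,G(\Theta^t;\xi^{(t)})$. If $0<\eta\le\frac{1}{2\mathcal L}$, then for all $t\ge0$, $$\mathbb E\|\Theta^t-\hat\Theta\|^2\le(1-\eta\mu)^t\|\Theta^0-\hat\Theta\|^2+\frac{2\eta\,\sigma^2_{\hat\Theta}}{\mu}.$$
   Context: Clients $1,\dots,n$ are partitioned into nonempty disjoint clusters $\mathcal I_1,\dots,\mathcal I_k$; $d\ge1$. Each $f_i:\mathbb R^d\to\mathbb R$ is differentiable, $\mu$-strongly convex and $L$-smooth ($0<\mu\le L$). Fix $\gamma_i>0$ and $\alpha_j\in[0,1]$, not all $\alpha_j=0$. For $\Theta=(\theta_1,\dots,\theta_n)$ let $\Theta_j$ be the stacked vector of $\theta_i$, $i\in\mathcal I_j$; define $\bar\theta_j=\frac{\sum_{i\in\mathcal I_j}\gamma_i\theta_i}{\sum_{i\in\mathcal I_j}\gamma_i}$, $\bar\theta=\frac{\sum_{j}\sum_{i\in\mathcal I_j}\alpha_j\gamma_i\theta_i}{\sum_{j}\sum_{i\in\mathcal I_j}\alpha_j\gamma_i}$, $\psi_j(\Theta_j)=\frac12\sum_{i\in\mathcal I_j}\gamma_i\|\theta_i-\bar\theta_j\|^2$,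 $\varphi(\Theta)=\frac12\sum_{j}\alpha_j\sum_{i\in\mathcal I_j}\gamma_i\|\theta_i-\bar\theta\|^2$, $F_j(\Theta_j)=\sum_{i\in\mathcal I_j}f_i(\theta_i)$, and $F(\Theta)=\sum_jF_j(\Theta_j)+\sum_j(1-\alpha_j)\psi_j(\Theta_j)+\varphi(\Theta)$; $\hat\Theta$ is its unique minimizer. Gradient oracle: $\xi=(\xi_0,\dots,\xi_k)$ independent Bernoulli with $\mathbb P(\xi_j=1)=p_j$; $G(\Theta;\xi)=(G_1,\dots,G_n)$ with, for $i\in\mathcal I_j$: $G_i=\frac{\gamma_i\alpha_j}{p_0}(\theta_i-\bar\theta)+\frac{\gamma_i\tau_j(1-\alpha_j)}{p_0}(\theta_i-\bar\theta_j)$ if $\xi_0=1$; $G_i=\frac{\gamma_i(1-\tau_j)(1-\alpha_j)}{(1-p_0)p_j}(\theta_i-\bar\theta_j)$ if $\xi_0=0,\xi_j=1$; $G_i=\frac{1}{(1-p_0)(1-p_j)}\nabla f_i(\theta_i)$ if $\xi_0=\xi_j=0$. Define $\mathcal L=\max\big\{\frac{2}{p_0}\max_{j}\max_{i\in\mathcal I_j}\alpha_j\gamma_i,\ \max_{j}\frac{2(1-\alpha_j)\max_{i\in\mathcal I_j}\gamma_i}{p_0+2(1-p_0)p_j},\ \frac{L}{1-p_0}\max_{j}\frac{1}{1-p_j}\big\}$ and $\sigma^2_{\hat\Theta}=\frac{2}{p_0}\|\nabla\varphi(\hat\Theta)\|^2+\sum_{j=1}^k\frac{2(1-\alpha_j)^2}{p_0+2(1-p_0)p_j}\|\nabla\psi_j(\hat\Theta_j)\|^2+\frac{1}{1-p_0}\sum_{j=1}^k\frac{1}{1-p_j}\|\nabla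 F_j(\hat\Theta_j)\|^2$. *)

theory Defs
  imports "HOL-Analysis.Analysis" "HOL-Probability.Probability"
begin

text \<open>Clients are indexed by a finite type 'n, clusters by a finite type 'k
  (cluster of client i is c i), model parameters live in real^'d.
  A full parameter Theta is an element of real^'d^'n (i.e. R^{nd}).\<close>

definition gradient :: "('a::real_inner \<Rightarrow> real) \<Rightarrow> 'a \<Rightarrow> 'a" where
  "gradient g x = (THE D. GDERIV g x :> D)"

definition strongly_convex :: "real \<Rightarrow> ('a::real_inner \<Rightarrow> real) \<Rightarrow> bool" where
  "strongly_convex \<mu> g \<longleftrightarrow> convex_on UNIV (\<lambda>x. g x - \<mu> / 2 * (norm x)\<^sup>2)"

definition L_smooth :: "real \<Rightarrow> ('a::real_inner \<Rightarrow> real) \<Rightarrow> bool" where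
  "L_smooth L g \<longleftrightarrow>
     (\<forall>x y. norm (gradient g x - gradient g y) \<le> L * norm (x - y))"

definition cbar :: "('n::finite \<Rightarrow> 'k) \<Rightarrow> ('n \<Rightarrow> real) \<Rightarrow> 'k \<Rightarrow> real^'d^'n \<Rightarrow> real^'d" where
  "cbar c \<gamma> j \<Theta> = (\<Sum>i\<in>{i. c i = j}. \<gamma> i *\<^sub>R \<Theta>$i) /\<^sub>R (\<Sum>i\<in>{i. c i = j}. \<gamma> i)"

definition gbar :: "('n::finite \<Rightarrow> 'k) \<Rightarrow> ('n \<Rightarrow> real) \<Rightarrow> ('k \<Rightarrow> real) \<Rightarrow> real^'d^'n \<Rightarrow> real^'d" where
  "gbar c \<gamma> \<alpha> \<Theta> = (\<Sum>i\<in>UNIV. (\<alpha> (c i) * \<gamma> i) *\<^sub>R \<Theta>$i) /\<^sub>R (\<Sum>i\<in>UNIV. \<alpha> (c i) * \<gamma> i)"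

text \<open>psi_j, phi and F_j, viewed as functions of the full parameter Theta
  (they depend only on the relevant blocks).\<close>

definition psi :: "('n::finite \<Rightarrow> 'k) \<Rightarrow> ('n \<Rightarrow> real) \<Rightarrow> 'k \<Rightarrow> real^'d^'n \<Rightarrow> real" where
  "psi c \<gamma> j \<Theta> = 1/2 * (\<Sum>i\<in>{i. c i = j}. \<gamma> i * (norm (\<Theta>$i - cbar c \<gamma> j \<Theta>))\<^sup>2)"

definition phi :: "('n::finite \<Rightarrow> 'k) \<Rightarrow> ('n \<Rightarrow> real) \<Rightarrow> ('k \<Rightarrow> real) \<Rightarrow> real^'d^'n \<Rightarrow> real" where
  "phi c \<gamma> \<alpha> \<Theta> = 1/2 * (\<Sum>i\<in>UNIV. \<alpha> (c i) * \<gamma> i * (norm (\<Theta>$i - gbar c \<gamma> \<alpha> \<Theta>))\<^sup>2)"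

definition Fcl :: "('n::finite \<Rightarrow> 'k) \<Rightarrow> ('n \<Rightarrow> real^'d \<Rightarrow> real) \<Rightarrow> 'k \<Rightarrow> real^'d^'n \<Rightarrow> real" where
  "Fcl c f j \<Theta> = (\<Sum>i\<in>{i. c i = j}. f i (\<Theta>$i))"

definition Fobj :: "('n::finite \<Rightarrow> 'k::finite) \<Rightarrow> ('n \<Rightarrow> real^'d \<Rightarrow> real) \<Rightarrow> ('n \<Rightarrow> real)
    \<Rightarrow> ('k \<Rightarrow> real) \<Rightarrow> real^'d^'n \<Rightarrow> real" where
  "Fobj c f \<gamma> \<alpha> \<Theta> = (\<Sum>j\<in>UNIV. Fcl c f j \<Theta>) + (\<Sum>j\<in>UNIV. (1 - \<alpha> j) * psi c \<gamma> j \<Theta>)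
     + phi c \<gamma> \<alpha> \<Theta>"

text \<open>The stochastic gradient oracle; xi = (xi_0, (xi_j)_j).\<close>

definition Gor :: "('n::finite \<Rightarrow> 'k) \<Rightarrow> ('n \<Rightarrow> real^'d \<Rightarrow> real) \<Rightarrow> ('n \<Rightarrow> real)
    \<Rightarrow> ('k \<Rightarrow> real) \<Rightarrow> real \<Rightarrow> ('k \<Rightarrow> real) \<Rightarrow> ('k \<Rightarrow> real)
    \<Rightarrow> real^'d^'n \<Rightarrow> bool \<times> ('k \<Rightarrow> bool) \<Rightarrow> real^'d^'n" where
  "Gor c f \<gamma> \<alpha> p0 p \<tau> \<Theta> \<xi> = (\<chi> i. let j = c i in
     if fst \<xi> then
       (\<gamma> i * \<alpha> j / p0) *\<^sub>R (\<Theta>$i - gbar c \<gamma> \<alpha> \<Theta>)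
       + (\<gamma> i * \<tau> j * (1 - \<alpha> j) / p0) *\<^sub>R (\<Theta>$i - cbar c \<gamma> j \<Theta>)
     else if snd \<xi> j then
       (\<gamma> i * (1 - \<tau> j) * (1 - \<alpha> j) / ((1 - p0) * p j)) *\<^sub>R (\<Theta>$i - cbar c \<gamma> j \<Theta>)
     else
       (1 / ((1 - p0) * (1 - p j))) *\<^sub>R gradient (f i) (\<Theta>$i))"

definition xi_pmf :: "real \<Rightarrow> ('k::finite \<Rightarrow> real) \<Rightarrow> (bool \<times> ('k \<Rightarrow> bool)) pmf" where
  "xi_pmf p0 p = pair_pmf (bernoulli_pmf p0) (Pi_pmf UNIV False (\<lambda>j. bernoulli_pmf (p j)))"

primrec iter :: "(real^'d^'n \<Rightarrow> bool \<times> ('k \<Rightarrow> bool) \<Rightarrow> real^'d^'n) \<Rightarrow> real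
    \<Rightarrow> real^'d^'n \<Rightarrow> (nat \<Rightarrow> bool \<times> ('k \<Rightarrow> bool)) \<Rightarrow> nat \<Rightarrow> real^'d^'n" where
  "iter G \<eta> \<Theta>0 xis 0 = \<Theta>0"
| "iter G \<eta> \<Theta>0 xis (Suc t) = iter G \<eta> \<Theta>0 xis t - \<eta> *\<^sub>R G (iter G \<eta> \<Theta>0 xis t) (xis t)"

definition calL :: "('n::finite \<Rightarrow> 'k::finite) \<Rightarrow> ('n \<Rightarrow> real) \<Rightarrow> ('k \<Rightarrow> real) \<Rightarrow> real
    \<Rightarrow> ('k \<Rightarrow> real) \<Rightarrow> real \<Rightarrow> real" where
  "calL c \<gamma> \<alpha> p0 p L = max (max
      (2 / p0 * Max (range (\<lambda>i. \<alpha> (c i) * \<gamma> i)))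
      (Max (range (\<lambda>j. 2 * (1 - \<alpha> j) * Max (\<gamma> ` {i. c i = j}) / (p0 + 2 * (1 - p0) * p j)))))
      (L / (1 - p0) * Max (range (\<lambda>j. 1 / (1 - p j))))"

definition sigma2 :: "('n::finite \<Rightarrow> 'k::finite) \<Rightarrow> ('n \<Rightarrow> real^'d \<Rightarrow> real) \<Rightarrow> ('n \<Rightarrow> real)
    \<Rightarrow> ('k \<Rightarrow> real) \<Rightarrow> real \<Rightarrow> ('k \<Rightarrow> real) \<Rightarrow> real^'d^'n \<Rightarrow> real" where
  "sigma2 c f \<gamma> \<alpha> p0 p \<Theta> =
     2 / p0 * (norm (gradient (phi c \<gamma> \<alpha>) \<Theta>))\<^sup>2
     + (\<Sum>j\<in>UNIV. 2 * (1 - \<alpha> j)\<^sup>2 / (p0 + 2 * (1 - p0) * p j) * (norm (gradient (psi c \<gamma> j) \<Theta>))\<^sup>2)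
     + 1 / (1 - p0) * (\<Sum>j\<in>UNIV. 1 / (1 - p j) * (norm (gradient (Fcl c f j) \<Theta>))\<^sup>2)"

end

theory Submission
  imports Defs
begin

text \<open>Client \<open>i\<close>'s component of the oracle depends on the sample only through \<open>\<xi>\<^sub>0\<close> and
  \<open>\<xi>\<^bsub>c i\<^esub>\<close>, and its mean over the three branches is client \<open>i\<close>'s component of \<open>\<nabla>F\<close>, which vanishes
  at the minimiser. So the expected squared step splits into a cross term and a second moment, and
  the second moment is at most twice the second moment at the minimiser (which sums to \<open>\<sigma>\<^sup>2\<close>; the
  choice of \<open>\<tau>\<^sub>j\<close> minimises the cluster part) plus twice that of the difference to it. Under
  \<open>\<eta> \<le> 1 / (2 calL)\<close> the difference terms are absorbed by the cross term: for the penalties because the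
  leftover inner products with the group means cancel after summing over the group, for the \<open>f\<^sub>i\<close>
  by co-coercivity of strongly convex smooth gradients, which also produces the factor \<open>1 - \<eta>\<mu>\<close>.
  Iterating \<open>E \<parallel>\<Theta>\<^bsub>t+1\<^esub> - \<Theta>hat\<parallel>\<^sup>2 \<le> (1 - \<eta>\<mu>) E \<parallel>\<Theta>\<^bsub>t\<^esub> - \<Theta>hat\<parallel>\<^sup>2 + 2\<eta>\<^sup>2\<sigma>\<^sup>2\<close> gives the bound, whose
  constant \<open>2\<eta>\<sigma>\<^sup>2/\<mu>\<close> is the fixed point of this recursion.\<close>

section \<open>Gradients of smooth strongly convex functions\<close>

lemma gradient_eqI:
  fixes g :: "'a::real_inner \<Rightarrow> real"
  assumes "(g has_derivative (\<lambda>h. h \<bullet> D)) (at x)"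
  shows "gradient g x = D"
  unfolding gradient_def
proof (rule the_equality)
  show "GDERIV g x :> D" using assms by (simp add: gderiv_def)
next
  fix D' assume "GDERIV g x :> D'"
  hence "(g has_derivative (\<lambda>h. h \<bullet> D')) (at x)" by (simp add: gderiv_def)
  from has_derivative_unique[OF assms this]
  have "(\<lambda>h. h \<bullet> D) = (\<lambda>h. h \<bullet> D')" .
  hence "(D' - D) \<bullet> D = (D' - D) \<bullet> D'" by metis
  hence "(D' - D) \<bullet> (D' - D) = 0" by (simp add: inner_diff_right)
  thus "D' = D" by simp
qed

lemma has_derivative_gradient:
  fixes g :: "'a::euclidean_space \<Rightarrow> real"
  assumes "g differentiable (at x)"
  shows "(g has_derivative (\<lambda>h. h \<bullet> gradient g x)) (at x)"
proof -
  obtain g' where g': "(g has_derivative g') (at x)" using assms differentiable_def by blast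
  have lin: "linear g'" using has_derivative_linear[OF g'] .
  define D where "D = (\<Sum>b\<in>Basis. g' b *\<^sub>R b)"
  have g'_eq: "g' h = h \<bullet> D" for h
  proof -
    have "g' h = g' (\<Sum>b\<in>Basis. (h \<bullet> b) *\<^sub>R b)" by (simp add: euclidean_representation)
    also have "\<dots> = (\<Sum>b\<in>Basis. (h \<bullet> b) * g' b)"
      by (simp add: linear_sum[OF lin] linear_scale[OF lin])
    also have "\<dots> = h \<bullet> D" by (simp add: D_def inner_sum_right mult.commute)
    finally show ?thesis .
  qed
  have gD: "(g has_derivative (\<lambda>h. h \<bullet> D)) (at x)"
    using g' by (rule has_derivative_eq_rhs) (simp add: g'_eq fun_eq_iff)
  with gradient_eqI[OF gD] show ?thesis by simp
qed

lemma convex_on_ge_tangent: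
  fixes h :: "'a::real_inner \<Rightarrow> real"
  assumes cv: "convex_on UNIV h" and d: "(h has_derivative (\<lambda>v. v \<bullet> D)) (at x)"
  shows "h y \<ge> h x + (y - x) \<bullet> D"
proof -
  define \<phi> where "\<phi> t = h (x + t *\<^sub>R (y - x))" for t :: real
  have cphi: "convex_on UNIV \<phi>"
  proof (rule convex_onI)
    fix t a b :: real assume t: "t > 0" "t < 1"
    have "x + ((1 - t) * a + t * b) *\<^sub>R (y - x)
        = (1 - t) *\<^sub>R (x + a *\<^sub>R (y - x)) + t *\<^sub>R (x + b *\<^sub>R (y - x))"
      by (simp add: algebra_simps)
    hence "\<phi> ((1 - t) *\<^sub>R a + t *\<^sub>R b)
        = h ((1 - t) *\<^sub>R (x + a *\<^sub>R (y - x)) + t *\<^sub>R (x + b *\<^sub>R (y - x)))"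
      by (simp add: \<phi>_def)
    also have "\<dots> \<le> (1 - t) * \<phi> a + t * \<phi> b"
      unfolding \<phi>_def using t by (intro convex_onD[OF cv]) auto
    finally show "\<phi> ((1 - t) *\<^sub>R a + t *\<^sub>R b) \<le> (1 - t) * \<phi> a + t * \<phi> b" .
  qed simp
  have "((\<lambda>t. x + t *\<^sub>R (y - x)) has_derivative (\<lambda>t. t *\<^sub>R (y - x))) (at 0)"
    by (auto intro!: derivative_eq_intros)
  moreover have "(h has_derivative (\<lambda>v. v \<bullet> D)) (at (x + 0 *\<^sub>R (y - x)))" using d by simp
  ultimately have "(\<phi> has_derivative (\<lambda>t. (t *\<^sub>R (y - x)) \<bullet> D)) (at 0)"
    unfolding \<phi>_def by (rule has_derivative_compose[of _ _ _ _ h])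
  hence "(\<phi> has_field_derivative ((y - x) \<bullet> D)) (at 0 within UNIV)"
    unfolding has_field_derivative_def
    by (rule has_derivative_eq_rhs) (auto simp: fun_eq_iff)
  from convex_on_imp_above_tangent[OF cphi _ _ _ this, of 1]
  have "\<phi> 1 - \<phi> 0 \<ge> (y - x) \<bullet> D" by simp
  thus ?thesis by (simp add: \<phi>_def)
qed

lemma L_smooth_quadratic_upper_bound:
  fixes f :: "'a::euclidean_space \<Rightarrow> real"
  assumes diff: "\<forall>z. f differentiable (at z)" and sm: "L_smooth L f"
  shows "f y \<le> f x + (y - x) \<bullet> gradient f x + L / 2 * (norm (y - x))\<^sup>2"
proof -
  define d where "d = y - x"
  define \<psi> where "\<psi> t = f (x + t *\<^sub>R d) - t * (d \<bullet> gradient f x) - L / 2 * t\<^sup>2 * (norm d)\<^sup>2"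
    for t :: real
  have "\<psi> 1 \<le> \<psi> 0"
  proof (rule DERIV_nonpos_imp_nonincreasing[of 0 1 \<psi>])
    fix t :: real assume t: "0 \<le> t" "t \<le> 1"
    have "((\<lambda>t. x + t *\<^sub>R d) has_derivative (\<lambda>t. t *\<^sub>R d)) (at t)"
      by (auto intro!: derivative_eq_intros)
    from has_derivative_compose[OF this has_derivative_gradient] diff
    have "((\<lambda>t. f (x + t *\<^sub>R d)) has_derivative
        (\<lambda>s. (s *\<^sub>R d) \<bullet> gradient f (x + t *\<^sub>R d))) (at t)" by blast
    hence "((\<lambda>t. f (x + t *\<^sub>R d)) has_field_derivative (d \<bullet> gradient f (x + t *\<^sub>R d))) (at t)"
      unfolding has_field_derivative_def
      by (rule has_derivative_eq_rhs) (auto simp: fun_eq_iff)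
    hence D: "(\<psi> has_field_derivative
        (d \<bullet> gradient f (x + t *\<^sub>R d) - d \<bullet> gradient f x - L * t * (norm d)\<^sup>2)) (at t)"
      unfolding \<psi>_def by (auto intro!: derivative_eq_intros)
    have "d \<bullet> (gradient f (x + t *\<^sub>R d) - gradient f x)
        \<le> norm d * norm (gradient f (x + t *\<^sub>R d) - gradient f x)"
      by (rule norm_cauchy_schwarz)
    also have "\<dots> \<le> norm d * (L * norm (x + t *\<^sub>R d - x))"
      using sm unfolding L_smooth_def by (intro mult_left_mono) (blast, simp)
    also have "\<dots> = L * t * (norm d)\<^sup>2" using t by (simp add: power2_eq_square)
    finally have "d \<bullet> gradient f (x + t *\<^sub>R d) - d \<bullet> gradient f x - L * t * (norm d)\<^sup>2 \<le> 0"
      by (simp add: inner_diff_right)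
    with D show "\<exists>y. (\<psi> has_real_derivative y) (at t) \<and> y \<le> 0" by blast
  qed simp
  thus ?thesis by (simp add: \<psi>_def d_def inner_commute)
qed

lemma strongly_convex_quadratic_lower_bound:
  fixes f :: "'a::euclidean_space \<Rightarrow> real"
  assumes diff: "\<forall>z. f differentiable (at z)" and sc: "strongly_convex \<mu> f"
  shows "f y \<ge> f x + (y - x) \<bullet> gradient f x + \<mu> / 2 * (norm (y - x))\<^sup>2"
proof -
  have cv: "convex_on UNIV (\<lambda>z. f z - \<mu> / 2 * (z \<bullet> z))"
    using sc unfolding strongly_convex_def by (simp add: power2_norm_eq_inner)
  have gf: "(f has_derivative (\<lambda>h. h \<bullet> gradient f x)) (at x)"
    using has_derivative_gradient diff by blast
  have "((\<lambda>z. f z - \<mu> / 2 * (z \<bullet> z)) has_derivative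
      (\<lambda>v. v \<bullet> (gradient f x - \<mu> *\<^sub>R x))) (at x)"
    by (rule has_derivative_eq_rhs, (rule derivative_intros gf)+)
       (auto simp: fun_eq_iff inner_diff_right inner_commute algebra_simps)
  from convex_on_ge_tangent[OF cv this, of y]
  have "f y - \<mu> / 2 * (y \<bullet> y) \<ge> f x - \<mu> / 2 * (x \<bullet> x) + (y - x) \<bullet> (gradient f x - \<mu> *\<^sub>R x)" .
  moreover have "\<mu> / 2 * (norm (y - x))\<^sup>2 = \<mu> / 2 * (y \<bullet> y) - \<mu> * (x \<bullet> y) + \<mu> / 2 * (x \<bullet> x)"
    by (simp add: power2_norm_eq_inner inner_diff_left inner_diff_right inner_commute algebra_simps)
  moreover have "(y - x) \<bullet> (gradient f x - \<mu> *\<^sub>R x)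
      = (y - x) \<bullet> gradient f x - \<mu> * (x \<bullet> y) + \<mu> * (x \<bullet> x)"
    by (simp add: inner_diff_right inner_diff_left inner_commute algebra_simps)
  ultimately show ?thesis by linarith
qed

lemma strongly_convex_L_smooth_gradient_inner_ge:
  fixes f :: "'a::euclidean_space \<Rightarrow> real"
  assumes diff: "\<forall>z. f differentiable (at z)" and sc: "strongly_convex \<mu> f"
    and sm: "L_smooth L f" and mu: "0 \<le> \<mu>" and L: "0 < L"
  shows "(gradient f x - gradient f y) \<bullet> (x - y) \<ge>
           \<mu> / 2 * (norm (x - y))\<^sup>2 + (norm (gradient f x - gradient f y))\<^sup>2 / (2 * L)"
proof -
  define gx where "gx = gradient f x"
  define gy where "gy = gradient f y"
  define e where "e = gy - gx"
  \<comment> \<open>Compare the bounds on \<open>f z\<close> from convexity at \<open>x\<close> and smoothness at \<open>y\<close>;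
    this \<open>z\<close> minimises the smoothness bound.\<close>
  define z where "z = y - (1 / L) *\<^sub>R e"
  have lower_x: "f x \<ge> f y + (x - y) \<bullet> gy + \<mu> / 2 * (norm (x - y))\<^sup>2"
    using strongly_convex_quadratic_lower_bound[OF diff sc] gy_def by blast
  have lower_z: "f z \<ge> f x + (z - x) \<bullet> gx"
    using strongly_convex_quadratic_lower_bound[OF diff sc, of x z] mu gx_def
    by (smt (verit) mult_nonneg_nonneg zero_le_power2 zero_le_divide_iff)
  have upper_z: "f z \<le> f y + (z - y) \<bullet> gy + L / 2 * (norm (z - y))\<^sup>2"
    using L_smooth_quadratic_upper_bound[OF diff sm] gy_def by blast
  have zy: "z - y = - (1 / L) *\<^sub>R e" by (simp add: z_def)
  have norm_zy: "(norm (z - y))\<^sup>2 = (1 / L)\<^sup>2 * (e \<bullet> e)"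
  proof -
    have "(norm (z - y))\<^sup>2 = (1 / L)\<^sup>2 * (norm e)\<^sup>2" using L by (simp add: zy power_mult_distrib power_divide)
    thus ?thesis by (simp add: power2_norm_eq_inner)
  qed
  have inner_zx: "(z - x) \<bullet> gx = (y - x) \<bullet> gx - (1 / L) * (e \<bullet> gx)"
    by (simp add: z_def inner_diff_left)
  have inner_zy: "(z - y) \<bullet> gy = - (1 / L) * (e \<bullet> gy)" by (simp add: zy)
  have inner_e: "e \<bullet> gy - e \<bullet> gx = e \<bullet> e" by (simp add: e_def inner_diff_right inner_diff_left)
  have "L / 2 * ((1 / L)\<^sup>2 * (e \<bullet> e)) = (e \<bullet> e) / (2 * L)" using L
    by (simp add: power2_eq_square field_simps)
  moreover have "(1 / L) * (e \<bullet> gy) - (1 / L) * (e \<bullet> gx) = (1 / L) * (e \<bullet> e)"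
    by (simp add: inner_e[symmetric] right_diff_distrib)
  moreover have "(1 / L) * (e \<bullet> e) = (e \<bullet> e) / (2 * L) + (e \<bullet> e) / (2 * L)"
    using L by (simp add: field_simps)
  ultimately have lower_y: "f y \<ge> f x + (y - x) \<bullet> gx + (e \<bullet> e) / (2 * L)"
    using lower_z upper_z unfolding norm_zy inner_zx inner_zy by linarith
  have inner_grad: "(gx - gy) \<bullet> (x - y) = - ((x - y) \<bullet> gy) - ((y - x) \<bullet> gx)"
    by (simp add: inner_diff_left inner_diff_right inner_commute)
  have norm_grad: "(norm (gx - gy))\<^sup>2 = e \<bullet> e"
    by (simp add: e_def power2_norm_eq_inner inner_diff_left inner_diff_right inner_commute)
  show ?thesis
    using lower_x lower_y unfolding gx_def[symmetric] gy_def[symmetric] norm_grad inner_grad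
    by linarith
qed

section \<open>One client step of the randomised oracle\<close>

lemma norm_add_sq_le:
  fixes x y :: "'a::real_inner"
  shows "(norm (x + y))\<^sup>2 \<le> 2 * (norm x)\<^sup>2 + 2 * (norm y)\<^sup>2"
proof -
  have "(norm (x + y))\<^sup>2 + (norm (x - y))\<^sup>2 = 2 * (norm x)\<^sup>2 + 2 * (norm y)\<^sup>2"
    by (simp add: power2_norm_eq_inner inner_add_left inner_add_right inner_diff_left inner_diff_right inner_commute)
  thus ?thesis by (smt (verit) zero_le_power2)
qed

lemma power2_norm_scaleR: "(norm (s *\<^sub>R (x::'a::real_normed_vector)))\<^sup>2 = s\<^sup>2 * (norm x)\<^sup>2"
  by (simp add: power_mult_distrib)

text \<open>The weight \<open>\<tau>\<close> of the cluster term in the global branch minimises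
  \<open>2 t\<^sup>2 / p0 + (1 - t)\<^sup>2 / ((1 - p0) P)\<close>, the cluster-term contribution to the second moment of
  the oracle; this identity gives the minimal value.\<close>

lemma tau_second_moment_identity:
  fixes p0 P :: real
  assumes "0 < p0" "p0 < 1" "0 < P" "P < 1"
  defines "t \<equiv> p0 / (p0 + 2 * (1 - p0) * P)"
  shows "2 * t\<^sup>2 / p0 + (1 - t)\<^sup>2 / ((1 - p0) * P) = 2 / (p0 + 2 * (1 - p0) * P)"
proof -
  define q where "q = (1 - p0) * P"
  define D where "D = p0 + 2 * q"
  have qp: "q > 0" using assms by (simp add: q_def)
  have Dp: "D > 0" using qp assms by (simp add: D_def)
  have tD: "t = p0 / D" by (simp add: t_def D_def q_def)
  have one_minus_t: "1 - t = 2 * q / D" using Dp by (simp add: tD D_def field_simps)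
  have "2 * t\<^sup>2 / p0 = 2 * p0 / D\<^sup>2" using assms(1) Dp by (simp add: tD power2_eq_square field_simps)
  moreover have "(1 - t)\<^sup>2 / q = 4 * q / D\<^sup>2" using qp Dp by (simp add: one_minus_t power2_eq_square field_simps)
  moreover have "2 * p0 / D\<^sup>2 + 4 * q / D\<^sup>2 = 2 / D"
  proof -
    have "2 * p0 / D\<^sup>2 + 4 * q / D\<^sup>2 = (2 * D) / D\<^sup>2" by (simp add: D_def add_divide_distrib[symmetric])
    also have "\<dots> = 2 / D" using Dp by (simp add: power2_eq_square)
    finally show ?thesis .
  qed
  ultimately have "2 * t\<^sup>2 / p0 + (1 - t)\<^sup>2 / q = 2 / D" by simp
  thus ?thesis unfolding q_def D_def by simp
qed

lemma oracle_second_moment_le: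
  fixes x y z :: "'a::real_inner" and g al t p0 P :: real
  assumes p: "0 < p0" "p0 < 1" "0 < P" "P < 1"
    and t: "t = p0 / (p0 + 2 * (1 - p0) * P)"
  shows "p0 * (norm ((g * al / p0) *\<^sub>R x + (g * t * (1 - al) / p0) *\<^sub>R y))\<^sup>2
       + (1 - p0) * P * (norm ((g * (1 - t) * (1 - al) / ((1 - p0) * P)) *\<^sub>R y))\<^sup>2
       + (1 - p0) * (1 - P) * (norm ((1 / ((1 - p0) * (1 - P))) *\<^sub>R z))\<^sup>2
     \<le> 2 / p0 * (g * al)\<^sup>2 * (norm x)\<^sup>2 + 2 / (p0 + 2 * (1 - p0) * P) * (g * (1 - al))\<^sup>2 * (norm y)\<^sup>2
       + 1 / ((1 - p0) * (1 - P)) * (norm z)\<^sup>2"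
proof -
  have q: "(1 - p0) * P > 0" "(1 - p0) * (1 - P) > 0" using p by auto
  have "(norm ((g * al / p0) *\<^sub>R x + (g * t * (1 - al) / p0) *\<^sub>R y))\<^sup>2
     \<le> 2 * ((g * al / p0)\<^sup>2 * (norm x)\<^sup>2) + 2 * ((g * t * (1 - al) / p0)\<^sup>2 * (norm y)\<^sup>2)"
    using norm_add_sq_le[of "(g * al / p0) *\<^sub>R x" "(g * t * (1 - al) / p0) *\<^sub>R y"]
    by (simp only: power2_norm_scaleR)
  hence global_branch: "p0 * (norm ((g * al / p0) *\<^sub>R x + (g * t * (1 - al) / p0) *\<^sub>R y))\<^sup>2
     \<le> 2 / p0 * (g * al)\<^sup>2 * (norm x)\<^sup>2 + 2 * t\<^sup>2 / p0 * (g * (1 - al))\<^sup>2 * (norm y)\<^sup>2"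
  proof -
    have lhs_x: "p0 * (2 * ((g * al / p0)\<^sup>2 * (norm x)\<^sup>2)) = 2 / p0 * (g * al)\<^sup>2 * (norm x)\<^sup>2"
      using p(1) by (simp add: power2_eq_square)
    have lhs_y: "p0 * (2 * ((g * t * (1 - al) / p0)\<^sup>2 * (norm y)\<^sup>2)) = 2 * t\<^sup>2 / p0 * (g * (1 - al))\<^sup>2 * (norm y)\<^sup>2"
      using p(1) by (simp add: power2_eq_square)
    show ?thesis using mult_left_mono[OF \<open>_ \<le> _\<close>, of p0] p(1) unfolding distrib_left lhs_x lhs_y by simp
  qed
  have cluster_branch: "(1 - p0) * P * (norm ((g * (1 - t) * (1 - al) / ((1 - p0) * P)) *\<^sub>R y))\<^sup>2
      = (1 - t)\<^sup>2 / ((1 - p0) * P) * (g * (1 - al))\<^sup>2 * (norm y)\<^sup>2"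
  proof -
    have scaled_sq: "q * (x / q)\<^sup>2 = x\<^sup>2 / q" if "q \<noteq> 0" for q x :: real
      using that by (simp add: power2_eq_square)
    have "(g * (1 - t) * (1 - al))\<^sup>2 = (1 - t)\<^sup>2 * (g * (1 - al))\<^sup>2" by (simp add: power_mult_distrib)
    moreover have "(1 - p0) * P * (g * (1 - t) * (1 - al) / ((1 - p0) * P))\<^sup>2 =
      (g * (1 - t) * (1 - al))\<^sup>2 / ((1 - p0) * P)" using scaled_sq[of "(1 - p0) * P" "g * (1 - t) * (1 - al)"] q by (metis less_irrefl)
    ultimately have coeff: "(1 - p0) * P * (g * (1 - t) * (1 - al) / ((1 - p0) * P))\<^sup>2 =
       (1 - t)\<^sup>2 / ((1 - p0) * P) * (g * (1 - al))\<^sup>2" by simp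
    show ?thesis unfolding power2_norm_scaleR mult.assoc[symmetric, of "(1 - p0) * P"] coeff ..
  qed
  have local_branch: "(1 - p0) * (1 - P) * (norm ((1 / ((1 - p0) * (1 - P))) *\<^sub>R z))\<^sup>2
      = 1 / ((1 - p0) * (1 - P)) * (norm z)\<^sup>2"
  proof -
    have coeff: "(1 - p0) * (1 - P) * (1 / ((1 - p0) * (1 - P)))\<^sup>2 = 1 / ((1 - p0) * (1 - P))"
      using q(2) by (simp add: power2_eq_square)
    show ?thesis unfolding power2_norm_scaleR mult.assoc[symmetric, of "(1 - p0) * (1 - P)"] coeff ..
  qed
  have cluster_terms: "2 * t\<^sup>2 / p0 * (g * (1 - al))\<^sup>2 * (norm y)\<^sup>2 + (1 - t)\<^sup>2 / ((1 - p0) * P) * (g * (1 - al))\<^sup>2 * (norm y)\<^sup>2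
     = 2 / (p0 + 2 * (1 - p0) * P) * (g * (1 - al))\<^sup>2 * (norm y)\<^sup>2"
  proof -
    have tau_identity: "2 * t\<^sup>2 / p0 + (1 - t)\<^sup>2 / ((1 - p0) * P) = 2 / (p0 + 2 * (1 - p0) * P)"
      unfolding t by (rule tau_second_moment_identity[OF p])
    have "(2 * t\<^sup>2 / p0 + (1 - t)\<^sup>2 / ((1 - p0) * P)) * ((g * (1 - al))\<^sup>2 * (norm y)\<^sup>2)
        = 2 / (p0 + 2 * (1 - p0) * P) * ((g * (1 - al))\<^sup>2 * (norm y)\<^sup>2)" unfolding tau_identity ..
    thus ?thesis by (simp only: distrib_right mult.assoc)
  qed
  show ?thesis using global_branch cluster_branch local_branch cluster_terms by linarith
qed

lemma three_point_step_sq_eq: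
  fixes r a b e :: "'a::real_inner" and p0 q1 q2 \<eta> :: real
  assumes "p0 + q1 + q2 = 1"
  shows "p0 * (norm (r - \<eta> *\<^sub>R a))\<^sup>2 + q1 * (norm (r - \<eta> *\<^sub>R b))\<^sup>2 + q2 * (norm (r - \<eta> *\<^sub>R e))\<^sup>2
     = (norm r)\<^sup>2 - 2 * \<eta> * (r \<bullet> (p0 *\<^sub>R a + q1 *\<^sub>R b + q2 *\<^sub>R e))
       + \<eta>\<^sup>2 * (p0 * (norm a)\<^sup>2 + q1 * (norm b)\<^sup>2 + q2 * (norm e)\<^sup>2)"
proof -
  have expand: "(norm (r - \<eta> *\<^sub>R x))\<^sup>2 = (norm r)\<^sup>2 - 2 * \<eta> * (r \<bullet> x) + \<eta>\<^sup>2 * (norm x)\<^sup>2" for x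
    unfolding power2_norm_eq_inner
    by (simp add: inner_diff_left inner_diff_right inner_commute power2_eq_square algebra_simps)
  have "p0 * (norm (r - \<eta> *\<^sub>R a))\<^sup>2 + q1 * (norm (r - \<eta> *\<^sub>R b))\<^sup>2 + q2 * (norm (r - \<eta> *\<^sub>R e))\<^sup>2
     = (p0 + q1 + q2) * (norm r)\<^sup>2 - 2 * \<eta> * (r \<bullet> (p0 *\<^sub>R a + q1 *\<^sub>R b + q2 *\<^sub>R e))
       + \<eta>\<^sup>2 * (p0 * (norm a)\<^sup>2 + q1 * (norm b)\<^sup>2 + q2 * (norm e)\<^sup>2)"
    unfolding expand by (simp add: inner_add_right algebra_simps)
  with assms show ?thesis by simp
qed

text \<open>The three branches, weighted by their probabilities, average to the client's component of the
  full gradient; \<open>stationary\<close> says this component vanishes at the optimum, so the second moment can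
  be split into the part caused by the distance to the optimum and the noise at the optimum.\<close>

lemma client_step_bias_variance_le:
  fixes r U V G U' V' G' :: "'a::real_inner" and g al t p0 P \<eta> :: real
  assumes p: "0 < p0" "p0 < 1" "0 < P" "P < 1"
    and t: "t = p0 / (p0 + 2 * (1 - p0) * P)"
    and stationary: "(g * al) *\<^sub>R U' + (g * (1 - al)) *\<^sub>R V' + G' = 0"
  shows "p0 * (norm (r - \<eta> *\<^sub>R ((g * al / p0) *\<^sub>R U + (g * t * (1 - al) / p0) *\<^sub>R V)))\<^sup>2
           + (1 - p0) * P * (norm (r - \<eta> *\<^sub>R ((g * (1 - t) * (1 - al) / ((1 - p0) * P)) *\<^sub>R V)))\<^sup>2
           + (1 - p0) * (1 - P) * (norm (r - \<eta> *\<^sub>R ((1 / ((1 - p0) * (1 - P))) *\<^sub>R G)))\<^sup>2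
     \<le> (norm r)\<^sup>2 - 2 * \<eta> * ((g * al) * ((U - U') \<bullet> r) + (g * (1 - al)) * ((V - V') \<bullet> r) + (G - G') \<bullet> r)
        + 2 * \<eta>\<^sup>2 * (2 / p0 * (g * al)\<^sup>2 * (norm (U - U'))\<^sup>2
              + 2 / (p0 + 2 * (1 - p0) * P) * (g * (1 - al))\<^sup>2 * (norm (V - V'))\<^sup>2
              + 1 / ((1 - p0) * (1 - P)) * (norm (G - G'))\<^sup>2)
        + 2 * \<eta>\<^sup>2 * (2 / p0 * (g * al)\<^sup>2 * (norm U')\<^sup>2
              + 2 / (p0 + 2 * (1 - p0) * P) * (g * (1 - al))\<^sup>2 * (norm V')\<^sup>2
              + 1 / ((1 - p0) * (1 - P)) * (norm G')\<^sup>2)"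
      (is "_ \<le> ?rhs")
proof -
  define a where "a U V = (g * al / p0) *\<^sub>R U + (g * t * (1 - al) / p0) *\<^sub>R V" for U V :: 'a
  define b where "b V = (g * (1 - t) * (1 - al) / ((1 - p0) * P)) *\<^sub>R V" for V :: 'a
  define e where "e G = (1 / ((1 - p0) * (1 - P))) *\<^sub>R G" for G :: 'a
  have q: "(1 - p0) * P > 0" "(1 - p0) * (1 - P) > 0" using p by auto
  have mean_coeff: "p0 * (g * t * (1 - al) / p0) + (1 - p0) * P * (g * (1 - t) * (1 - al) / ((1 - p0) * P))
      = g * (1 - al)"
    using p q by (simp add: field_simps)
  have "p0 *\<^sub>R a U V + ((1 - p0) * P) *\<^sub>R b V + ((1 - p0) * (1 - P)) *\<^sub>R e G
      = (g * al) *\<^sub>R U + (p0 * (g * t * (1 - al) / p0)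
          + (1 - p0) * P * (g * (1 - t) * (1 - al) / ((1 - p0) * P))) *\<^sub>R V + G"
    unfolding a_def b_def e_def using p q by (simp add: scaleR_add_right scaleR_add_left)
  also have "\<dots> = (g * al) *\<^sub>R (U - U') + (g * (1 - al)) *\<^sub>R (V - V') + (G - G')"
    unfolding mean_coeff using stationary by (simp add: algebra_simps)
  finally have mean: "r \<bullet> (p0 *\<^sub>R a U V + ((1 - p0) * P) *\<^sub>R b V + ((1 - p0) * (1 - P)) *\<^sub>R e G)
      = (g * al) * ((U - U') \<bullet> r) + (g * (1 - al)) * ((V - V') \<bullet> r) + (G - G') \<bullet> r"
    by (simp add: inner_add_right inner_commute)
  have split_sq: "(norm x)\<^sup>2 \<le> 2 * (norm (x - y))\<^sup>2 + 2 * (norm y)\<^sup>2" for x y :: 'a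
    using norm_add_sq_le[of "x - y" y] by simp
  have "p0 * (norm (a U V))\<^sup>2 + (1 - p0) * P * (norm (b V))\<^sup>2 + (1 - p0) * (1 - P) * (norm (e G))\<^sup>2
     \<le> 2 * (p0 * (norm (a (U - U') (V - V')))\<^sup>2 + (1 - p0) * P * (norm (b (V - V')))\<^sup>2
            + (1 - p0) * (1 - P) * (norm (e (G - G')))\<^sup>2)
       + 2 * (p0 * (norm (a U' V'))\<^sup>2 + (1 - p0) * P * (norm (b V'))\<^sup>2 + (1 - p0) * (1 - P) * (norm (e G'))\<^sup>2)"
  proof -
    have "a U V - a U' V' = a (U - U') (V - V')" "b V - b V' = b (V - V')" "e G - e G' = e (G - G')"
      unfolding a_def b_def e_def by (simp_all add: algebra_simps scaleR_diff_right)
    thus ?thesis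
      using mult_left_mono[OF split_sq[of "a U V" "a U' V'"], of p0]
        mult_left_mono[OF split_sq[of "b V" "b V'"], of "(1 - p0) * P"]
        mult_left_mono[OF split_sq[of "e G" "e G'"], of "(1 - p0) * (1 - P)"] p q
      by (simp add: algebra_simps)
  qed
  also have "\<dots> \<le> 2 * (2 / p0 * (g * al)\<^sup>2 * (norm (U - U'))\<^sup>2
              + 2 / (p0 + 2 * (1 - p0) * P) * (g * (1 - al))\<^sup>2 * (norm (V - V'))\<^sup>2
              + 1 / ((1 - p0) * (1 - P)) * (norm (G - G'))\<^sup>2)
        + 2 * (2 / p0 * (g * al)\<^sup>2 * (norm U')\<^sup>2
              + 2 / (p0 + 2 * (1 - p0) * P) * (g * (1 - al))\<^sup>2 * (norm V')\<^sup>2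
              + 1 / ((1 - p0) * (1 - P)) * (norm G')\<^sup>2)"
    unfolding a_def b_def e_def by (intro add_mono mult_left_mono oracle_second_moment_le[OF p t]) auto
  finally have "\<eta>\<^sup>2 * (p0 * (norm (a U V))\<^sup>2 + (1 - p0) * P * (norm (b V))\<^sup>2
      + (1 - p0) * (1 - P) * (norm (e G))\<^sup>2) \<le> \<eta>\<^sup>2 * (\<dots>)"
    by (rule mult_left_mono) simp
  moreover have "p0 + (1 - p0) * P + (1 - p0) * (1 - P) = 1" by (simp add: algebra_simps)
  note step_sq = three_point_step_sq_eq[OF this, of r \<eta> "a U V" "b V" "e G"]
  ultimately have "p0 * (norm (r - \<eta> *\<^sub>R a U V))\<^sup>2 + (1 - p0) * P * (norm (r - \<eta> *\<^sub>R b V))\<^sup>2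
      + (1 - p0) * (1 - P) * (norm (r - \<eta> *\<^sub>R e G))\<^sup>2 \<le> ?rhs"
    unfolding step_sq mean by (simp add: algebra_simps)
  thus ?thesis unfolding a_def b_def e_def .
qed

lemma client_step_contraction:
  fixes r dG mU mV :: "'a::real_inner" and w b a cw cb \<eta> \<mu> L Ec S :: real
  assumes E: "Ec \<le> (norm r)\<^sup>2 - 2 * \<eta> * (w * ((r - mU) \<bullet> r) + b * ((r - mV) \<bullet> r) + dG \<bullet> r)
        + 2 * \<eta>\<^sup>2 * (cw * w\<^sup>2 * (norm (r - mU))\<^sup>2 + cb * b\<^sup>2 * (norm (r - mV))\<^sup>2 + a * (norm dG)\<^sup>2)
        + 2 * \<eta>\<^sup>2 * S"
    and pos: "0 \<le> w" "0 \<le> b" "0 \<le> \<eta>" "0 < L"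
    and step_small: "\<eta> * cw * w \<le> 1" "\<eta> * cb * b \<le> 1" "2 * \<eta> * a * L \<le> 1"
    and grad_inner: "dG \<bullet> r \<ge> \<mu> / 2 * (norm r)\<^sup>2 + (norm dG)\<^sup>2 / (2 * L)"
  shows "Ec \<le> (1 - \<eta> * \<mu>) * (norm r)\<^sup>2 - 2 * \<eta> * (w * ((r - mU) \<bullet> mU) + b * ((r - mV) \<bullet> mV))
    + 2 * \<eta>\<^sup>2 * S"
proof -
  define dU where "dU = r - mU"
  define dV where "dV = r - mV"
  have inner_dU: "dU \<bullet> r = (norm dU)\<^sup>2 + dU \<bullet> mU"
    by (simp add: dU_def power2_norm_eq_inner inner_diff_right)
  have inner_dV: "dV \<bullet> r = (norm dV)\<^sup>2 + dV \<bullet> mV"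
    by (simp add: dV_def power2_norm_eq_inner inner_diff_right)
  have absorb: "2 * \<eta>\<^sup>2 * (k * v\<^sup>2 * x) \<le> 2 * \<eta> * (v * x)"
    if "\<eta> * k * v \<le> 1" "0 \<le> v" "0 \<le> x" for k v x
  proof -
    have "2 * \<eta>\<^sup>2 * (k * v\<^sup>2 * x) = (\<eta> * k * v) * (2 * \<eta> * v * x)"
      by (simp add: power2_eq_square)
    also have "\<dots> \<le> 1 * (2 * \<eta> * v * x)"
      using that pos by (intro mult_right_mono) auto
    finally show ?thesis by simp
  qed
  note variance_dU = absorb[OF step_small(1) pos(1) zero_le_power2, of "norm dU"]
  note variance_dV = absorb[OF step_small(2) pos(2) zero_le_power2, of "norm dV"]
  have variance_dG: "2 * \<eta>\<^sup>2 * (a * (norm dG)\<^sup>2) \<le> \<eta> * ((norm dG)\<^sup>2 / L)"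
  proof -
    have "2 * \<eta>\<^sup>2 * (a * (norm dG)\<^sup>2) = (2 * \<eta> * a * L) * (\<eta> * ((norm dG)\<^sup>2 / L))"
      using pos by (simp add: power2_eq_square)
    also have "\<dots> \<le> 1 * (\<eta> * ((norm dG)\<^sup>2 / L))"
      using pos step_small by (intro mult_right_mono) auto
    finally show ?thesis by simp
  qed
  have cocoercive_term: "2 * \<eta> * (dG \<bullet> r) \<ge> \<eta> * \<mu> * (norm r)\<^sup>2 + \<eta> * ((norm dG)\<^sup>2 / L)"
  proof -
    have "2 * \<eta> * (dG \<bullet> r) \<ge> 2 * \<eta> * (\<mu> / 2 * (norm r)\<^sup>2 + (norm dG)\<^sup>2 / (2 * L))"
      using grad_inner pos by (intro mult_left_mono) auto
    moreover have "2 * \<eta> * (\<mu> / 2 * (norm r)\<^sup>2 + (norm dG)\<^sup>2 / (2 * L)) = \<eta> * \<mu> * (norm r)\<^sup>2 + \<eta> * ((norm dG)\<^sup>2 / L)"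
      using pos by (simp add: field_simps)
    ultimately show ?thesis by simp
  qed
  have linear_terms: "2 * \<eta> * (w * (dU \<bullet> r) + b * (dV \<bullet> r) + dG \<bullet> r)
     = 2 * \<eta> * (w * (norm dU)\<^sup>2) + 2 * \<eta> * (b * (norm dV)\<^sup>2) + 2 * \<eta> * (dG \<bullet> r)
       + 2 * \<eta> * (w * (dU \<bullet> mU) + b * (dV \<bullet> mV))"
    unfolding inner_dU inner_dV by (simp add: algebra_simps)
  have quadratic_terms: "2 * \<eta>\<^sup>2 * (cw * w\<^sup>2 * (norm dU)\<^sup>2 + cb * b\<^sup>2 * (norm dV)\<^sup>2 + a * (norm dG)\<^sup>2)
     = 2 * \<eta>\<^sup>2 * (cw * w\<^sup>2 * (norm dU)\<^sup>2) + 2 * \<eta>\<^sup>2 * (cb * b\<^sup>2 * (norm dV)\<^sup>2) + 2 * \<eta>\<^sup>2 * (a * (norm dG)\<^sup>2)"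
    by (simp add: algebra_simps)
  show ?thesis
    using E unfolding dU_def[symmetric] dV_def[symmetric] linear_terms quadratic_terms
    using variance_dU variance_dV variance_dG cocoercive_term
    by (simp add: algebra_simps)
qed

section \<open>Expectations over finite distributions\<close>

lemma expectation_finite_pmf:
  fixes h :: "'a \<Rightarrow> real"
  assumes "finite (set_pmf M)"
  shows "measure_pmf.expectation M h = (\<Sum>a\<in>set_pmf M. pmf M a * h a)"
  by (subst integral_measure_pmf[OF assms]) auto

lemma expectation_pair_pmf_finite:
  fixes h :: "'a \<times> 'b \<Rightarrow> real"
  assumes A: "finite (set_pmf A)" and B: "finite (set_pmf B)"
  shows "measure_pmf.expectation (pair_pmf A B) h =
         measure_pmf.expectation B (\<lambda>b. measure_pmf.expectation A (\<lambda>a. h (a, b)))"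
proof -
  have "finite (set_pmf (pair_pmf A B))" using A B by (simp add: set_pair_pmf)
  hence "measure_pmf.expectation (pair_pmf A B) h
      = (\<Sum>x\<in>set_pmf A \<times> set_pmf B. pmf (pair_pmf A B) x * h x)"
    by (simp add: expectation_finite_pmf set_pair_pmf)
  also have "\<dots> = (\<Sum>a\<in>set_pmf A. \<Sum>b\<in>set_pmf B. pmf A a * pmf B b * h (a, b))"
    by (auto simp: sum.cartesian_product pmf_pair intro!: sum.cong)
  also have "\<dots> = (\<Sum>b\<in>set_pmf B. pmf B b * (\<Sum>a\<in>set_pmf A. pmf A a * h (a, b)))"
    by (subst sum.swap) (simp add: sum_distrib_left mult.commute mult.left_commute)
  also have "\<dots> = measure_pmf.expectation B (\<lambda>b. measure_pmf.expectation A (\<lambda>a. h (a, b)))"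
    using expectation_finite_pmf[OF A] expectation_finite_pmf[OF B] by simp
  finally show ?thesis .
qed

lemma finite_set_Pi_pmf_lessThan:
  assumes "finite (set_pmf Q)"
  shows "finite (set_pmf (Pi_pmf {..<t::nat} dflt (\<lambda>_. Q)))"
proof (rule finite_subset)
  show "set_pmf (Pi_pmf {..<t} dflt (\<lambda>_. Q)) \<subseteq> PiE_dflt {..<t} dflt (set_pmf \<circ> (\<lambda>_. Q))"
    using set_Pi_pmf_subset'[of "{..<t}" dflt "\<lambda>_. Q"] by simp
  show "finite (PiE_dflt {..<t} dflt (set_pmf \<circ> (\<lambda>_. Q)))"
    using assms by (intro finite_PiE_dflt) auto
qed

lemma iter_cong:
  assumes "\<forall>s<t. xis s = xis' s"
  shows "iter G \<eta> \<Theta>0 xis t = iter G \<eta> \<Theta>0 xis' t"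
  using assms by (induction t) auto

lemma expectation_iter_le:
  fixes G :: "real^'d^'n \<Rightarrow> bool \<times> ('k \<Rightarrow> bool) \<Rightarrow> real^'d^'n"
  assumes fin: "finite (set_pmf Q)"
    and step: "\<And>\<Theta>. measure_pmf.expectation Q (\<lambda>y. (norm (\<Theta> - \<eta> *\<^sub>R G \<Theta> y - \<Theta>h))\<^sup>2)
                 \<le> \<rho> * (norm (\<Theta> - \<Theta>h))\<^sup>2 + cst"
    and rho: "0 \<le> \<rho>" and K: "\<rho> * K + cst \<le> K" and K0: "0 \<le> K"
  shows "measure_pmf.expectation (Pi_pmf {..<t} dflt (\<lambda>_. Q))
           (\<lambda>xis. (norm (iter G \<eta> \<Theta>0 xis t - \<Theta>h))\<^sup>2) \<le> \<rho> ^ t * (norm (\<Theta>0 - \<Theta>h))\<^sup>2 + K"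
proof (induction t)
  case 0
  with K0 show ?case by simp
next
  case (Suc t)
  define P where "P = Pi_pmf {..<t} dflt (\<lambda>_. Q)"
  define X where "X xis = iter G \<eta> \<Theta>0 xis t" for xis
  have fP: "finite (set_pmf P)" unfolding P_def by (rule finite_set_Pi_pmf_lessThan[OF fin])
  have "{..<Suc t} = insert t {..<t}" by auto
  hence Pi_Suc: "Pi_pmf {..<Suc t} dflt (\<lambda>_. Q) = map_pmf (\<lambda>(y, f). f(t := y)) (pair_pmf Q P)"
    unfolding P_def by (simp add: Pi_pmf_insert)
  have X_upd: "iter G \<eta> \<Theta>0 (f(t := y)) t = X f" for f y
    unfolding X_def by (rule iter_cong) auto
  have "measure_pmf.expectation (Pi_pmf {..<Suc t} dflt (\<lambda>_. Q))
           (\<lambda>xis. (norm (iter G \<eta> \<Theta>0 xis (Suc t) - \<Theta>h))\<^sup>2)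
      = measure_pmf.expectation (pair_pmf Q P)
           (\<lambda>x. (norm (X (snd x) - \<eta> *\<^sub>R G (X (snd x)) (fst x) - \<Theta>h))\<^sup>2)"
    unfolding Pi_Suc by (simp add: case_prod_beta X_upd)
  also have "\<dots> = measure_pmf.expectation P
      (\<lambda>f. measure_pmf.expectation Q (\<lambda>y. (norm (X f - \<eta> *\<^sub>R G (X f) y - \<Theta>h))\<^sup>2))"
    by (subst expectation_pair_pmf_finite[OF fin fP]) simp
  also have "\<dots> \<le> measure_pmf.expectation P (\<lambda>f. \<rho> * (norm (X f - \<Theta>h))\<^sup>2 + cst)"
    by (intro integral_mono integrable_measure_pmf_finite fP step)
  also have "\<dots> = \<rho> * measure_pmf.expectation P (\<lambda>f. (norm (X f - \<Theta>h))\<^sup>2) + cst"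
    by (simp add: integrable_measure_pmf_finite[OF fP])
  also have "\<dots> \<le> \<rho> * (\<rho> ^ t * (norm (\<Theta>0 - \<Theta>h))\<^sup>2 + K) + cst"
    using Suc.IH rho unfolding P_def X_def by (intro add_right_mono mult_left_mono) auto
  also have "\<dots> \<le> \<rho> ^ Suc t * (norm (\<Theta>0 - \<Theta>h))\<^sup>2 + K"
    using K by (simp add: algebra_simps)
  finally show ?case .
qed

lemma finite_set_xi_pmf: "finite (set_pmf (xi_pmf p0 (p :: 'k::finite \<Rightarrow> real)))"
  by (rule finite_subset[OF subset_UNIV]) simp

lemma expectation_xi_pmf_client:
  fixes h :: "bool \<Rightarrow> bool \<Rightarrow> real" and p :: "'k::finite \<Rightarrow> real"
  assumes "0 \<le> p0" "p0 \<le> 1" "0 \<le> p j" "p j \<le> 1"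
  shows "measure_pmf.expectation (xi_pmf p0 p) (\<lambda>\<xi>. h (fst \<xi>) (snd \<xi> j)) =
    p0 * (p j * h True True + (1 - p j) * h True False)
    + (1 - p0) * (p j * h False True + (1 - p j) * h False False)"
proof -
  have "map_pmf (\<lambda>\<xi>. (fst \<xi>, snd \<xi> j)) (xi_pmf p0 p)
      = map_pmf (\<lambda>(a, b). (id a, (\<lambda>f. f j) b))
          (pair_pmf (bernoulli_pmf p0) (Pi_pmf UNIV False (\<lambda>j. bernoulli_pmf (p j))))"
    unfolding xi_pmf_def by (intro map_pmf_cong) auto
  also have "\<dots> = pair_pmf (bernoulli_pmf p0) (bernoulli_pmf (p j))"
    by (simp add: map_pair Pi_pmf_component)
  finally have marginal: "map_pmf (\<lambda>\<xi>. (fst \<xi>, snd \<xi> j)) (xi_pmf p0 p)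
      = pair_pmf (bernoulli_pmf p0) (bernoulli_pmf (p j))" .
  have "measure_pmf.expectation (xi_pmf p0 p) (\<lambda>\<xi>. h (fst \<xi>) (snd \<xi> j))
      = measure_pmf.expectation (map_pmf (\<lambda>\<xi>. (fst \<xi>, snd \<xi> j)) (xi_pmf p0 p)) (case_prod h)"
    by simp
  also have "\<dots> = measure_pmf.expectation (bernoulli_pmf (p j))
       (\<lambda>b. measure_pmf.expectation (bernoulli_pmf p0) (\<lambda>a. h a b))"
    unfolding marginal by (subst expectation_pair_pmf_finite) auto
  also have "\<dots> = p0 * (p j * h True True + (1 - p j) * h True False)
    + (1 - p0) * (p j * h False True + (1 - p j) * h False False)"
    using assms by (simp add: algebra_simps)
  finally show ?thesis .
qed

section \<open>Gradient of the objective\<close>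

text \<open>Both penalties \<open>\<phi>\<close> and \<open>\<psi>\<^sub>j\<close> are weighted spreads of a group of clients around their weighted
  mean: \<open>\<phi>\<close> over all clients with weights \<open>\<alpha>\<^sub>j \<gamma>\<^sub>i\<close>, \<open>\<psi>\<^sub>j\<close> over cluster \<open>j\<close> with weights \<open>\<gamma>\<^sub>i\<close>.\<close>

definition weighted_mean :: "'n::finite set \<Rightarrow> ('n \<Rightarrow> real) \<Rightarrow> real^'d^'n \<Rightarrow> real^'d" where
  "weighted_mean S w \<Theta> = (\<Sum>i\<in>S. w i *\<^sub>R \<Theta>$i) /\<^sub>R (\<Sum>i\<in>S. w i)"

definition spread :: "'n::finite set \<Rightarrow> ('n \<Rightarrow> real) \<Rightarrow> real^'d^'n \<Rightarrow> real" where
  "spread S w \<Theta> = 1/2 * (\<Sum>i\<in>S. w i * (norm (\<Theta>$i - weighted_mean S w \<Theta>))\<^sup>2)"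

definition spread_gradient :: "'n::finite set \<Rightarrow> ('n \<Rightarrow> real) \<Rightarrow> real^'d^'n \<Rightarrow> real^'d^'n" where
  "spread_gradient S w \<Theta> = (\<chi> i. if i \<in> S then w i *\<^sub>R (\<Theta>$i - weighted_mean S w \<Theta>) else 0)"

lemma gbar_eq_weighted_mean: "gbar c \<gamma> \<alpha> = weighted_mean UNIV (\<lambda>i. \<alpha> (c i) * \<gamma> i)"
  by (simp add: fun_eq_iff gbar_def weighted_mean_def)

lemma cbar_eq_weighted_mean: "cbar c \<gamma> j = weighted_mean {i. c i = j} \<gamma>"
  by (simp add: fun_eq_iff cbar_def weighted_mean_def)

lemma phi_eq_spread: "phi c \<gamma> \<alpha> = spread UNIV (\<lambda>i. \<alpha> (c i) * \<gamma> i)"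
  by (simp add: fun_eq_iff phi_def spread_def gbar_eq_weighted_mean)

lemma psi_eq_spread: "psi c \<gamma> j = spread {i. c i = j} \<gamma>"
  by (simp add: fun_eq_iff psi_def spread_def cbar_eq_weighted_mean)

lemma weighted_mean_diff:
  "weighted_mean S w (\<Theta> - \<Theta>') = weighted_mean S w \<Theta> - weighted_mean S w \<Theta>'"
  by (simp add: weighted_mean_def scaleR_diff_right sum_subtractf scaleR_diff_left)

lemma sum_weighted_deviation_eq_0:
  assumes "(\<Sum>i\<in>S. w i) \<noteq> 0"
  shows "(\<Sum>i\<in>S. w i *\<^sub>R (\<Theta>$i - weighted_mean S w \<Theta>)) = 0"
  using assms
  by (simp add: weighted_mean_def scaleR_diff_right sum_subtractf scaleR_sum_left[symmetric]
      sum_distrib_right[symmetric])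

lemma has_derivative_vec_nth [derivative_intros]: "((\<lambda>x. x $ i) has_derivative (\<lambda>h. h $ i)) F"
  by (rule bounded_linear_imp_has_derivative) (rule bounded_linear_vec_nth)

lemma has_derivative_weighted_mean: "(weighted_mean S w has_derivative weighted_mean S w) F"
  unfolding weighted_mean_def[abs_def] by (auto intro!: derivative_eq_intros)

text \<open>The derivative of the mean drops out because the weighted deviations sum to zero.\<close>

lemma has_derivative_spread:
  assumes W: "(\<Sum>i\<in>S. w i) \<noteq> 0"
  shows "(spread S w has_derivative (\<lambda>h. h \<bullet> spread_gradient S w \<Theta>)) (at \<Theta>)"
proof -
  let ?m = "weighted_mean S w" and ?U = "\<lambda>i. \<Theta>$i - weighted_mean S w \<Theta>"
  have "((\<lambda>\<Theta>. 1/2 * (\<Sum>i\<in>S. w i * ((\<Theta>$i - ?m \<Theta>) \<bullet> (\<Theta>$i - ?m \<Theta>)))) has_derivative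
     (\<lambda>h. 1/2 * (\<Sum>i\<in>S. w i * (?U i \<bullet> (h$i - ?m h) + (h$i - ?m h) \<bullet> ?U i)))) (at \<Theta>)"
    by (auto intro!: derivative_eq_intros has_derivative_weighted_mean)
  moreover have "1/2 * (\<Sum>i\<in>S. w i * (?U i \<bullet> (h$i - ?m h) + (h$i - ?m h) \<bullet> ?U i))
      = h \<bullet> spread_gradient S w \<Theta>" for h
  proof -
    have "1/2 * (\<Sum>i\<in>S. w i * (?U i \<bullet> (h$i - ?m h) + (h$i - ?m h) \<bullet> ?U i))
      = (\<Sum>i\<in>S. w i * (h$i \<bullet> ?U i)) - ?m h \<bullet> (\<Sum>i\<in>S. w i *\<^sub>R ?U i)"
      by (simp add: inner_commute inner_diff_left inner_sum_right sum_subtractf[symmetric]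
          sum_distrib_left algebra_simps)
    also have "\<dots> = (\<Sum>i\<in>S. w i * (h$i \<bullet> ?U i))"
      by (simp only: sum_weighted_deviation_eq_0[OF W] inner_zero_right diff_zero)
    also have "\<dots> = h \<bullet> spread_gradient S w \<Theta>"
      unfolding spread_gradient_def inner_vec_def[of h]
      by (simp add: if_distrib sum.If_cases cong: if_cong)
    finally show ?thesis .
  qed
  ultimately show ?thesis
    unfolding spread_def[abs_def] power2_norm_eq_inner by simp
qed

lemma power2_norm_vec: "(norm (x::real^'d^'n))\<^sup>2 = (\<Sum>i\<in>UNIV. (norm (x$i))\<^sup>2)"
  unfolding power2_norm_eq_inner inner_vec_def[of x] ..

lemma power2_norm_spread_gradient:
  "(norm (spread_gradient S w \<Theta>))\<^sup>2 = (\<Sum>i\<in>S. (w i)\<^sup>2 * (norm (\<Theta>$i - weighted_mean S w \<Theta>))\<^sup>2)"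
proof -
  have "(norm (spread_gradient S w \<Theta>))\<^sup>2 = (\<Sum>i\<in>S. (norm (spread_gradient S w \<Theta> $ i))\<^sup>2)"
    unfolding power2_norm_vec by (intro sum.mono_neutral_right) (auto simp: spread_gradient_def)
  also have "\<dots> = (\<Sum>i\<in>S. (w i)\<^sup>2 * (norm (\<Theta>$i - weighted_mean S w \<Theta>))\<^sup>2)"
    by (intro sum.cong) (auto simp: spread_gradient_def power_mult_distrib)
  finally show ?thesis .
qed

definition Fcl_gradient :: "('n::finite \<Rightarrow> 'k) \<Rightarrow> ('n \<Rightarrow> real^'d \<Rightarrow> real) \<Rightarrow> 'k
    \<Rightarrow> real^'d^'n \<Rightarrow> real^'d^'n" where
  "Fcl_gradient c f j \<Theta> = (\<chi> i. if c i = j then gradient (f i) (\<Theta>$i) else 0)"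

lemma has_derivative_Fcl:
  fixes f :: "'n::finite \<Rightarrow> real^'d \<Rightarrow> real"
  assumes diff: "\<forall>i x. f i differentiable (at x)"
  shows "(Fcl c f j has_derivative (\<lambda>h. h \<bullet> Fcl_gradient c f j \<Theta>)) (at \<Theta>)"
proof -
  have "((\<lambda>\<Theta>. \<Sum>i\<in>{i. c i = j}. f i (\<Theta>$i)) has_derivative
        (\<lambda>h. \<Sum>i\<in>{i. c i = j}. h$i \<bullet> gradient (f i) (\<Theta>$i))) (at \<Theta>)"
    using diff
    by (intro has_derivative_sum has_derivative_compose[OF has_derivative_vec_nth has_derivative_gradient])
      auto
  moreover have "(\<Sum>i\<in>{i. c i = j}. h$i \<bullet> gradient (f i) (\<Theta>$i)) = h \<bullet> Fcl_gradient c f j \<Theta>" for h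
    unfolding Fcl_gradient_def inner_vec_def[of h]
    by (simp add: if_distrib sum.If_cases cong: if_cong)
  ultimately show ?thesis unfolding Fcl_def[abs_def] by simp
qed

lemma power2_norm_Fcl_gradient:
  "(norm (Fcl_gradient c f j \<Theta>))\<^sup>2 = (\<Sum>i\<in>{i. c i = j}. (norm (gradient (f i) (\<Theta>$i)))\<^sup>2)"
proof -
  have "(norm (Fcl_gradient c f j \<Theta>))\<^sup>2 = (\<Sum>i\<in>{i. c i = j}. (norm (Fcl_gradient c f j \<Theta> $ i))\<^sup>2)"
    unfolding power2_norm_vec by (intro sum.mono_neutral_right) (auto simp: Fcl_gradient_def)
  also have "\<dots> = (\<Sum>i\<in>{i. c i = j}. (norm (gradient (f i) (\<Theta>$i)))\<^sup>2)"
    by (intro sum.cong) (auto simp: Fcl_gradient_def)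
  finally show ?thesis .
qed

definition Fobj_gradient :: "('n::finite \<Rightarrow> 'k::finite) \<Rightarrow> ('n \<Rightarrow> real^'d \<Rightarrow> real) \<Rightarrow> ('n \<Rightarrow> real)
    \<Rightarrow> ('k \<Rightarrow> real) \<Rightarrow> real^'d^'n \<Rightarrow> real^'d^'n" where
  "Fobj_gradient c f \<gamma> \<alpha> \<Theta> = (\<Sum>j\<in>UNIV. Fcl_gradient c f j \<Theta>)
     + (\<Sum>j\<in>UNIV. (1 - \<alpha> j) *\<^sub>R spread_gradient {i. c i = j} \<gamma> \<Theta>)
     + spread_gradient UNIV (\<lambda>i. \<alpha> (c i) * \<gamma> i) \<Theta>"

lemma Fobj_gradient_component:
  "Fobj_gradient c f \<gamma> \<alpha> \<Theta> $ i = gradient (f i) (\<Theta>$i)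
     + ((1 - \<alpha> (c i)) * \<gamma> i) *\<^sub>R (\<Theta>$i - cbar c \<gamma> (c i) \<Theta>)
     + (\<alpha> (c i) * \<gamma> i) *\<^sub>R (\<Theta>$i - gbar c \<gamma> \<alpha> \<Theta>)"
  by (simp add: Fobj_gradient_def Fcl_gradient_def spread_gradient_def sum_component
      gbar_eq_weighted_mean cbar_eq_weighted_mean if_distrib cong: if_cong)

lemma has_derivative_Fobj:
  fixes f :: "'n::finite \<Rightarrow> real^'d \<Rightarrow> real" and c :: "'n \<Rightarrow> 'k::finite"
  assumes diff: "\<forall>i x. f i differentiable (at x)"
    and W: "(\<Sum>i\<in>UNIV. \<alpha> (c i) * \<gamma> i) \<noteq> 0"
    and Wj: "\<And>j. (\<Sum>i\<in>{i. c i = j}. \<gamma> i) \<noteq> 0"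
  shows "(Fobj c f \<gamma> \<alpha> has_derivative (\<lambda>h. h \<bullet> Fobj_gradient c f \<gamma> \<alpha> \<Theta>)) (at \<Theta>)"
proof -
  have "((\<lambda>\<Theta>. (\<Sum>j\<in>UNIV. Fcl c f j \<Theta>) + (\<Sum>j\<in>UNIV. (1 - \<alpha> j) * psi c \<gamma> j \<Theta>) + phi c \<gamma> \<alpha> \<Theta>)
     has_derivative (\<lambda>h. (\<Sum>j\<in>UNIV. h \<bullet> Fcl_gradient c f j \<Theta>)
       + (\<Sum>j\<in>UNIV. (1 - \<alpha> j) * (h \<bullet> spread_gradient {i. c i = j} \<gamma> \<Theta>))
       + h \<bullet> spread_gradient UNIV (\<lambda>i. \<alpha> (c i) * \<gamma> i) \<Theta>)) (at \<Theta>)"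
    unfolding phi_eq_spread psi_eq_spread
    by (intro has_derivative_add has_derivative_sum has_derivative_mult_right
        has_derivative_Fcl[OF diff] has_derivative_spread Wj W)
  thus ?thesis
    unfolding Fobj_def[abs_def] by (simp add: Fobj_gradient_def inner_add_right inner_sum_right)
qed

section \<open>Summing the client steps\<close>

lemma sum_weighted_deviation_inner_eq_0:
  assumes "(\<Sum>i\<in>S. w i) \<noteq> 0"
  shows "(\<Sum>i\<in>S. w i * ((R$i - weighted_mean S w R) \<bullet> v)) = 0"
proof -
  have "(\<Sum>i\<in>S. w i * ((R$i - weighted_mean S w R) \<bullet> v))
      = (\<Sum>i\<in>S. w i *\<^sub>R (R$i - weighted_mean S w R)) \<bullet> v"
    by (simp add: inner_sum_left)
  also have "\<dots> = 0"
    by (simp only: sum_weighted_deviation_eq_0[OF assms] inner_zero_left)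
  finally show ?thesis .
qed

lemma sum_over_clusters:
  fixes c :: "'n::finite \<Rightarrow> 'k::finite"
  shows "(\<Sum>j\<in>UNIV. \<Sum>i\<in>{i. c i = j}. h i) = (\<Sum>i\<in>UNIV. h i)"
  using sum.group[of UNIV UNIV c h] by simp

lemma sum_clusters:
  fixes c :: "'n::finite \<Rightarrow> 'k::finite" and K :: "'k \<Rightarrow> real"
  shows "(\<Sum>j\<in>UNIV. K j * (\<Sum>i\<in>{i. c i = j}. X i)) = (\<Sum>i\<in>UNIV. K (c i) * X i)"
proof -
  have "(\<Sum>j\<in>UNIV. K j * (\<Sum>i\<in>{i. c i = j}. X i)) = (\<Sum>j\<in>UNIV. \<Sum>i\<in>{i. c i = j}. K (c i) * X i)"
    by (auto simp: sum_distrib_left intro!: sum.cong)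
  also have "\<dots> = (\<Sum>i\<in>UNIV. K (c i) * X i)"
    by (rule sum_over_clusters)
  finally show ?thesis .
qed

lemma sum_cluster_deviation_inner_eq_0:
  fixes c :: "'n::finite \<Rightarrow> 'k::finite"
  assumes "\<And>j. (\<Sum>i\<in>{i. c i = j}. \<gamma> i) \<noteq> 0"
  shows "(\<Sum>i\<in>UNIV. (\<gamma> i * \<beta> (c i)) * ((R$i - cbar c \<gamma> (c i) R) \<bullet> v (c i))) = 0"
proof -
  have "(\<Sum>i\<in>UNIV. (\<gamma> i * \<beta> (c i)) * ((R$i - cbar c \<gamma> (c i) R) \<bullet> v (c i)))
      = (\<Sum>j\<in>UNIV. \<Sum>i\<in>{i. c i = j}. (\<gamma> i * \<beta> (c i)) * ((R$i - cbar c \<gamma> (c i) R) \<bullet> v (c i)))"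
    by (rule sum_over_clusters[symmetric])
  also have "\<dots> = (\<Sum>j\<in>UNIV. \<beta> j * (\<Sum>i\<in>{i. c i = j}. \<gamma> i * ((R$i - cbar c \<gamma> j R) \<bullet> v j)))"
    by (auto simp: sum_distrib_left mult_ac intro!: sum.cong)
  also have "\<dots> = 0"
    by (simp add: cbar_eq_weighted_mean sum_weighted_deviation_inner_eq_0[OF assms])
  finally show ?thesis .
qed

lemma expectation_Gor_step:
  fixes c :: "'n::finite \<Rightarrow> 'k::finite" and f :: "'n \<Rightarrow> real^'d \<Rightarrow> real"
    and \<gamma> :: "'n \<Rightarrow> real" and \<alpha> \<tau> :: "'k \<Rightarrow> real" and \<Theta> \<Theta>' :: "real^'d^'n"
  assumes "0 \<le> p0" "p0 \<le> 1" "\<forall>j. 0 \<le> p j \<and> p j \<le> 1"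
  defines "G \<equiv> Gor c f \<gamma> \<alpha> p0 p \<tau> \<Theta>"
  shows "measure_pmf.expectation (xi_pmf p0 p) (\<lambda>\<xi>. (norm (\<Theta> - \<eta> *\<^sub>R G \<xi> - \<Theta>'))\<^sup>2)
    = (\<Sum>i\<in>UNIV. p0 * (norm ((\<Theta> - \<eta> *\<^sub>R G (True, \<lambda>_. True) - \<Theta>')$i))\<^sup>2
        + (1 - p0) * p (c i) * (norm ((\<Theta> - \<eta> *\<^sub>R G (False, \<lambda>_. True) - \<Theta>')$i))\<^sup>2
        + (1 - p0) * (1 - p (c i)) * (norm ((\<Theta> - \<eta> *\<^sub>R G (False, \<lambda>_. False) - \<Theta>')$i))\<^sup>2)"
proof -
  define h where "h i a b = (norm ((\<Theta> - \<eta> *\<^sub>R G (a, \<lambda>_. b) - \<Theta>')$i))\<^sup>2" for i a b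
  have "(norm (\<Theta> - \<eta> *\<^sub>R G \<xi> - \<Theta>'))\<^sup>2 = (\<Sum>i\<in>UNIV. h i (fst \<xi>) (snd \<xi> (c i)))" for \<xi>
    unfolding power2_norm_vec h_def by (intro sum.cong refl) (simp add: G_def Gor_def Let_def)
  hence "measure_pmf.expectation (xi_pmf p0 p) (\<lambda>\<xi>. (norm (\<Theta> - \<eta> *\<^sub>R G \<xi> - \<Theta>'))\<^sup>2)
      = (\<Sum>i\<in>UNIV. measure_pmf.expectation (xi_pmf p0 p) (\<lambda>\<xi>. h i (fst \<xi>) (snd \<xi> (c i))))"
    by (simp add: integral_sum integrable_measure_pmf_finite[OF finite_set_xi_pmf])
  also have "\<dots> = (\<Sum>i\<in>UNIV. p0 * (p (c i) * h i True True + (1 - p (c i)) * h i True False)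
      + (1 - p0) * (p (c i) * h i False True + (1 - p (c i)) * h i False False))"
    using assms by (simp add: expectation_xi_pmf_client)
  also have "\<dots> = (\<Sum>i\<in>UNIV. p0 * h i True True + (1 - p0) * p (c i) * h i False True
      + (1 - p0) * (1 - p (c i)) * h i False False)"
  proof -
    have "h i True False = h i True True" for i by (simp add: h_def G_def Gor_def)
    thus ?thesis by (simp add: algebra_simps)
  qed
  finally show ?thesis unfolding h_def .
qed

locale clustered_problem =
  fixes c :: "'n::finite \<Rightarrow> 'k::finite"
    and f :: "'n \<Rightarrow> real^'d \<Rightarrow> real"
    and \<gamma> :: "'n \<Rightarrow> real" and \<alpha> :: "'k \<Rightarrow> real"
    and \<mu> L p0 \<eta> :: real and p \<tau> :: "'k \<Rightarrow> real"
    and \<Theta>hat :: "real^'d^'n"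
  assumes clusters_nonempty: "surj c"
    and \<gamma>_pos: "\<forall>i. \<gamma> i > 0"
    and \<alpha>_range: "\<forall>j. 0 \<le> \<alpha> j \<and> \<alpha> j \<le> 1"
    and \<alpha>_nonzero: "\<exists>j. \<alpha> j \<noteq> 0"
    and \<mu>L: "0 < \<mu>" "\<mu> \<le> L"
    and f_diff: "\<forall>i x. f i differentiable (at x)"
    and f_sc: "\<forall>i. strongly_convex \<mu> (f i)"
    and f_smooth: "\<forall>i. L_smooth L (f i)"
    and minimizer: "\<forall>\<Theta>. Fobj c f \<gamma> \<alpha> \<Theta>hat \<le> Fobj c f \<gamma> \<alpha> \<Theta>"
    and p0: "0 < p0" "p0 < 1"
    and pj: "\<forall>j. 0 < p j \<and> p j < 1"
    and \<tau>_def: "\<forall>j. \<tau> j = p0 / (p0 + 2 * (1 - p0) * p j)"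
    and \<eta>: "0 < \<eta>" "\<eta> \<le> 1 / (2 * calL c \<gamma> \<alpha> p0 p L)"
begin

lemma cluster_weight_pos: "0 < (\<Sum>i\<in>{i. c i = j}. \<gamma> i)"
proof -
  obtain i0 where "c i0 = j" using clusters_nonempty by (metis surjD)
  hence "{i. c i = j} \<noteq> {}" by auto
  thus ?thesis using \<gamma>_pos by (intro sum_pos) auto
qed

lemma total_weight_pos: "0 < (\<Sum>i\<in>UNIV. \<alpha> (c i) * \<gamma> i)"
proof -
  obtain j where j: "\<alpha> j \<noteq> 0" using \<alpha>_nonzero by blast
  obtain i0 where i0: "c i0 = j" using clusters_nonempty by (metis surjD)
  have "0 < \<alpha> (c i0) * \<gamma> i0" using j i0 \<alpha>_range \<gamma>_pos by (metis mult_pos_pos order_le_less)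
  also have "\<dots> \<le> (\<Sum>i\<in>UNIV. \<alpha> (c i) * \<gamma> i)"
    using \<alpha>_range \<gamma>_pos by (intro member_le_sum) (auto intro: mult_nonneg_nonneg less_imp_le)
  finally show ?thesis .
qed

lemma cluster_denominator_pos: "0 < p0 + 2 * (1 - p0) * p j"
  using p0 pj by (smt (verit) mult_nonneg_nonneg)

lemma calL_ge_global_weight: "2 / p0 * (\<gamma> i * \<alpha> (c i)) \<le> calL c \<gamma> \<alpha> p0 p L"
proof -
  have "\<gamma> i * \<alpha> (c i) \<le> Max (range (\<lambda>i. \<alpha> (c i) * \<gamma> i))"
    by (intro Max_ge) (auto simp: mult.commute)
  hence "2 / p0 * (\<gamma> i * \<alpha> (c i)) \<le> 2 / p0 * Max (range (\<lambda>i. \<alpha> (c i) * \<gamma> i))"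
    using p0 by (intro mult_left_mono) auto
  thus ?thesis unfolding calL_def by linarith
qed

lemma calL_ge_cluster_weight:
  "2 / (p0 + 2 * (1 - p0) * p (c i)) * (\<gamma> i * (1 - \<alpha> (c i))) \<le> calL c \<gamma> \<alpha> p0 p L"
proof -
  have "\<gamma> i \<le> Max (\<gamma> ` {i'. c i' = c i})" by (intro Max_ge) auto
  hence "2 * (1 - \<alpha> (c i)) * \<gamma> i / (p0 + 2 * (1 - p0) * p (c i))
      \<le> 2 * (1 - \<alpha> (c i)) * Max (\<gamma> ` {i'. c i' = c i}) / (p0 + 2 * (1 - p0) * p (c i))"
    using cluster_denominator_pos[of "c i"] \<alpha>_range by (intro divide_right_mono mult_left_mono) auto
  also have "\<dots> \<le> Max (range (\<lambda>j. 2 * (1 - \<alpha> j) * Max (\<gamma> ` {i. c i = j}) / (p0 + 2 * (1 - p0) * p j)))"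
    by (intro Max_ge) auto
  finally show ?thesis unfolding calL_def by (simp add: mult.commute mult.left_commute)
qed

lemma calL_ge_smoothness: "L * (1 / ((1 - p0) * (1 - p j))) \<le> calL c \<gamma> \<alpha> p0 p L"
proof -
  have "1 / (1 - p j) \<le> Max (range (\<lambda>j. 1 / (1 - p j)))" by (intro Max_ge) auto
  hence "L / (1 - p0) * (1 / (1 - p j)) \<le> L / (1 - p0) * Max (range (\<lambda>j. 1 / (1 - p j)))"
    using \<mu>L p0 by (intro mult_left_mono) auto
  thus ?thesis unfolding calL_def by (simp add: mult.commute mult.left_commute)
qed

lemma step_size_le_half:
  assumes "X \<le> calL c \<gamma> \<alpha> p0 p L"
  shows "\<eta> * X \<le> 1 / 2"
proof -
  have calL_pos: "0 < calL c \<gamma> \<alpha> p0 p L"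
    using calL_ge_smoothness[of undefined] \<mu>L p0 pj by (smt (verit) divide_pos_pos mult_pos_pos)
  have "\<eta> * X \<le> \<eta> * calL c \<gamma> \<alpha> p0 p L" using assms \<eta> by (intro mult_left_mono) auto
  also have "\<dots> \<le> 1 / (2 * calL c \<gamma> \<alpha> p0 p L) * calL c \<gamma> \<alpha> p0 p L"
    using \<eta> calL_pos by (intro mult_right_mono) auto
  also have "\<dots> = 1 / 2" using calL_pos by simp
  finally show ?thesis .
qed

lemma step_size_mu_le_half: "\<eta> * \<mu> \<le> 1 / 2"
proof (rule step_size_le_half)
  have "1 \<le> 1 / ((1 - p0) * (1 - p j))" for j
  proof -
    have "0 < (1 - p0) * (1 - p j)" "(1 - p0) * (1 - p j) \<le> 1"
      using p0 pj[rule_format, of j] mult_le_one[of "1 - p0" "1 - p j"] by auto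
    thus ?thesis by (simp add: le_divide_eq)
  qed
  hence "L * 1 \<le> L * (1 / ((1 - p0) * (1 - p undefined)))"
    using \<mu>L by (intro mult_left_mono) auto
  hence "\<mu> \<le> L * (1 / ((1 - p0) * (1 - p undefined)))"
    using \<mu>L by simp
  thus "\<mu> \<le> calL c \<gamma> \<alpha> p0 p L" using calL_ge_smoothness by (rule order_trans)
qed

lemma client_stationary:
  "(\<gamma> i * \<alpha> (c i)) *\<^sub>R (\<Theta>hat$i - gbar c \<gamma> \<alpha> \<Theta>hat)
   + (\<gamma> i * (1 - \<alpha> (c i))) *\<^sub>R (\<Theta>hat$i - cbar c \<gamma> (c i) \<Theta>hat)
   + gradient (f i) (\<Theta>hat$i) = 0"
proof -
  have "Fobj_gradient c f \<gamma> \<alpha> \<Theta>hat = 0"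
  proof -
    have "(\<lambda>h. h \<bullet> Fobj_gradient c f \<gamma> \<alpha> \<Theta>hat) = (\<lambda>h. 0)"
    proof (rule has_derivative_local_min[OF has_derivative_Fobj[OF f_diff]])
      show "(\<Sum>i\<in>UNIV. \<alpha> (c i) * \<gamma> i) \<noteq> 0" using total_weight_pos by simp
      show "(\<Sum>i\<in>{i. c i = j}. \<gamma> i) \<noteq> 0" for j using cluster_weight_pos[of j] by simp
    qed (use minimizer in auto)
    hence "Fobj_gradient c f \<gamma> \<alpha> \<Theta>hat \<bullet> Fobj_gradient c f \<gamma> \<alpha> \<Theta>hat = 0" by metis
    thus ?thesis by simp
  qed
  hence "Fobj_gradient c f \<gamma> \<alpha> \<Theta>hat $ i = 0" by simp
  thus ?thesis unfolding Fobj_gradient_component by (simp add: algebra_simps)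
qed

definition client_noise :: "'n \<Rightarrow> real" where
  "client_noise i = 2 / p0 * (\<gamma> i * \<alpha> (c i))\<^sup>2 * (norm (\<Theta>hat$i - gbar c \<gamma> \<alpha> \<Theta>hat))\<^sup>2
     + 2 / (p0 + 2 * (1 - p0) * p (c i)) * (\<gamma> i * (1 - \<alpha> (c i)))\<^sup>2
         * (norm (\<Theta>hat$i - cbar c \<gamma> (c i) \<Theta>hat))\<^sup>2
     + 1 / ((1 - p0) * (1 - p (c i))) * (norm (gradient (f i) (\<Theta>hat$i)))\<^sup>2"

lemma sigma2_eq_sum_client_noise: "sigma2 c f \<gamma> \<alpha> p0 p \<Theta>hat = (\<Sum>i\<in>UNIV. client_noise i)"
proof -
  have "gradient (phi c \<gamma> \<alpha>) \<Theta>hat = spread_gradient UNIV (\<lambda>i. \<alpha> (c i) * \<gamma> i) \<Theta>hat"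
    unfolding phi_eq_spread using total_weight_pos by (intro gradient_eqI has_derivative_spread) simp
  hence phi_part: "(norm (gradient (phi c \<gamma> \<alpha>) \<Theta>hat))\<^sup>2
      = (\<Sum>i\<in>UNIV. (\<gamma> i * \<alpha> (c i))\<^sup>2 * (norm (\<Theta>hat$i - gbar c \<gamma> \<alpha> \<Theta>hat))\<^sup>2)"
    by (simp add: power2_norm_spread_gradient gbar_eq_weighted_mean mult.commute)
  have psi_norm: "(norm (gradient (psi c \<gamma> j) \<Theta>hat))\<^sup>2
      = (\<Sum>i\<in>{i. c i = j}. (\<gamma> i)\<^sup>2 * (norm (\<Theta>hat$i - cbar c \<gamma> (c i) \<Theta>hat))\<^sup>2)" for j
  proof -
    have "gradient (psi c \<gamma> j) \<Theta>hat = spread_gradient {i. c i = j} \<gamma> \<Theta>hat"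
      unfolding psi_eq_spread using cluster_weight_pos[of j]
      by (intro gradient_eqI has_derivative_spread) simp
    thus ?thesis
      by (auto simp: power2_norm_spread_gradient cbar_eq_weighted_mean intro!: sum.cong)
  qed
  have psi_part: "(\<Sum>j\<in>UNIV. 2 * (1 - \<alpha> j)\<^sup>2 / (p0 + 2 * (1 - p0) * p j)
        * (norm (gradient (psi c \<gamma> j) \<Theta>hat))\<^sup>2)
      = (\<Sum>i\<in>UNIV. 2 * (1 - \<alpha> (c i))\<^sup>2 / (p0 + 2 * (1 - p0) * p (c i))
        * ((\<gamma> i)\<^sup>2 * (norm (\<Theta>hat$i - cbar c \<gamma> (c i) \<Theta>hat))\<^sup>2))"
    unfolding psi_norm by (rule sum_clusters)
  have "gradient (Fcl c f j) \<Theta>hat = Fcl_gradient c f j \<Theta>hat" for j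
    by (intro gradient_eqI has_derivative_Fcl f_diff)
  hence F_norm: "(norm (gradient (Fcl c f j) \<Theta>hat))\<^sup>2
      = (\<Sum>i\<in>{i. c i = j}. (norm (gradient (f i) (\<Theta>hat$i)))\<^sup>2)" for j
    by (simp add: power2_norm_Fcl_gradient)
  have F_part: "(\<Sum>j\<in>UNIV. 1 / (1 - p j) * (norm (gradient (Fcl c f j) \<Theta>hat))\<^sup>2)
      = (\<Sum>i\<in>UNIV. 1 / (1 - p (c i)) * (norm (gradient (f i) (\<Theta>hat$i)))\<^sup>2)"
    unfolding F_norm by (rule sum_clusters)
  show ?thesis
    unfolding sigma2_def phi_part psi_part F_part client_noise_def sum_distrib_left
      sum.distrib[symmetric]
    by (intro sum.cong refl) (simp add: power_mult_distrib mult_ac)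
qed

lemma client_noise_nonneg: "0 \<le> client_noise i"
  unfolding client_noise_def using p0 pj[rule_format, of "c i"] cluster_denominator_pos[of "c i"]
  by (intro add_nonneg_nonneg mult_nonneg_nonneg) auto

lemma client_step_le:
  fixes \<Theta> :: "real^'d^'n"
  defines "G \<equiv> Gor c f \<gamma> \<alpha> p0 p \<tau> \<Theta>" and "R \<equiv> \<Theta> - \<Theta>hat"
  shows "p0 * (norm ((\<Theta> - \<eta> *\<^sub>R G (True, \<lambda>_. True) - \<Theta>hat)$i))\<^sup>2
      + (1 - p0) * p (c i) * (norm ((\<Theta> - \<eta> *\<^sub>R G (False, \<lambda>_. True) - \<Theta>hat)$i))\<^sup>2
      + (1 - p0) * (1 - p (c i)) * (norm ((\<Theta> - \<eta> *\<^sub>R G (False, \<lambda>_. False) - \<Theta>hat)$i))\<^sup>2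
    \<le> (1 - \<eta> * \<mu>) * (norm (R$i))\<^sup>2
      - 2 * \<eta> * ((\<gamma> i * \<alpha> (c i)) * ((R$i - gbar c \<gamma> \<alpha> R) \<bullet> gbar c \<gamma> \<alpha> R)
                 + (\<gamma> i * (1 - \<alpha> (c i))) * ((R$i - cbar c \<gamma> (c i) R) \<bullet> cbar c \<gamma> (c i) R))
      + 2 * \<eta>\<^sup>2 * client_noise i"
proof -
  define U where "U = \<Theta>$i - gbar c \<gamma> \<alpha> \<Theta>"
  define V where "V = \<Theta>$i - cbar c \<gamma> (c i) \<Theta>"
  define U' where "U' = \<Theta>hat$i - gbar c \<gamma> \<alpha> \<Theta>hat"
  define V' where "V' = \<Theta>hat$i - cbar c \<gamma> (c i) \<Theta>hat"
  have P: "0 < p (c i)" "p (c i) < 1" using pj by auto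
  have t: "\<tau> (c i) = p0 / (p0 + 2 * (1 - p0) * p (c i))" using \<tau>_def by auto
  have dU: "U - U' = R$i - gbar c \<gamma> \<alpha> R" and dV: "V - V' = R$i - cbar c \<gamma> (c i) R"
    by (simp_all add: U_def U'_def V_def V'_def R_def gbar_eq_weighted_mean cbar_eq_weighted_mean
        weighted_mean_diff)
  have branches:
    "(\<Theta> - \<eta> *\<^sub>R G (True, \<lambda>_. True) - \<Theta>hat)$i
       = R$i - \<eta> *\<^sub>R ((\<gamma> i * \<alpha> (c i) / p0) *\<^sub>R U + (\<gamma> i * \<tau> (c i) * (1 - \<alpha> (c i)) / p0) *\<^sub>R V)"
    "(\<Theta> - \<eta> *\<^sub>R G (False, \<lambda>_. True) - \<Theta>hat)$i
       = R$i - \<eta> *\<^sub>R ((\<gamma> i * (1 - \<tau> (c i)) * (1 - \<alpha> (c i)) / ((1 - p0) * p (c i))) *\<^sub>R V)"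
    "(\<Theta> - \<eta> *\<^sub>R G (False, \<lambda>_. False) - \<Theta>hat)$i
       = R$i - \<eta> *\<^sub>R ((1 / ((1 - p0) * (1 - p (c i)))) *\<^sub>R gradient (f i) (\<Theta>$i))"
    by (simp_all add: G_def R_def Gor_def Let_def U_def V_def diff_right_commute)
  have weights: "\<eta> * (2 / p0) * (\<gamma> i * \<alpha> (c i)) \<le> 1"
    "\<eta> * (2 / (p0 + 2 * (1 - p0) * p (c i))) * (\<gamma> i * (1 - \<alpha> (c i))) \<le> 1"
    "2 * \<eta> * (1 / ((1 - p0) * (1 - p (c i)))) * L \<le> 1"
  proof -
    have "\<eta> * (2 / p0 * (\<gamma> i * \<alpha> (c i))) \<le> 1 / 2"
      "\<eta> * (2 / (p0 + 2 * (1 - p0) * p (c i)) * (\<gamma> i * (1 - \<alpha> (c i)))) \<le> 1 / 2"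
      "\<eta> * (L * (1 / ((1 - p0) * (1 - p (c i))))) \<le> 1 / 2"
      by (intro step_size_le_half calL_ge_global_weight calL_ge_cluster_weight calL_ge_smoothness)+
    moreover have "2 * \<eta> * (1 / ((1 - p0) * (1 - p (c i)))) * L
        = 2 * (\<eta> * (L * (1 / ((1 - p0) * (1 - p (c i))))))"
      by (simp only: mult_ac)
    ultimately show "\<eta> * (2 / p0) * (\<gamma> i * \<alpha> (c i)) \<le> 1"
      "\<eta> * (2 / (p0 + 2 * (1 - p0) * p (c i))) * (\<gamma> i * (1 - \<alpha> (c i))) \<le> 1"
      "2 * \<eta> * (1 / ((1 - p0) * (1 - p (c i)))) * L \<le> 1"
      unfolding mult.assoc by linarith+
  qed
  have nonneg: "0 \<le> \<gamma> i * \<alpha> (c i)" "0 \<le> \<gamma> i * (1 - \<alpha> (c i))" "0 \<le> \<eta>" "0 < L"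
    using \<gamma>_pos[rule_format, of i] \<alpha>_range[rule_format, of "c i"] \<eta> \<mu>L
    by (auto intro!: mult_nonneg_nonneg)
  have cocoercive: "(gradient (f i) (\<Theta>$i) - gradient (f i) (\<Theta>hat$i)) \<bullet> R$i
      \<ge> \<mu> / 2 * (norm (R$i))\<^sup>2 + (norm (gradient (f i) (\<Theta>$i) - gradient (f i) (\<Theta>hat$i)))\<^sup>2 / (2 * L)"
    using strongly_convex_L_smooth_gradient_inner_ge[of "f i" \<mu> L "\<Theta>$i" "\<Theta>hat$i"]
      f_diff f_sc f_smooth \<mu>L by (simp add: R_def)
  from client_step_bias_variance_le[where r="R$i" and \<eta>=\<eta> and U=U and V=V
      and G="gradient (f i) (\<Theta>$i)", OF p0 P t client_stationary[of i]]
  show ?thesis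
    unfolding branches U'_def[symmetric] V'_def[symmetric] client_noise_def dU dV
    by (rule client_step_contraction[OF _ nonneg weights cocoercive])
qed

lemma expected_step_le:
  "measure_pmf.expectation (xi_pmf p0 p) (\<lambda>\<xi>. (norm (\<Theta> - \<eta> *\<^sub>R Gor c f \<gamma> \<alpha> p0 p \<tau> \<Theta> \<xi> - \<Theta>hat))\<^sup>2)
    \<le> (1 - \<eta> * \<mu>) * (norm (\<Theta> - \<Theta>hat))\<^sup>2 + 2 * \<eta>\<^sup>2 * sigma2 c f \<gamma> \<alpha> p0 p \<Theta>hat"
proof -
  define R where "R = \<Theta> - \<Theta>hat"
  have global_cancel: "(\<Sum>i\<in>UNIV. (\<gamma> i * \<alpha> (c i)) * ((R$i - gbar c \<gamma> \<alpha> R) \<bullet> gbar c \<gamma> \<alpha> R)) = 0"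
    using sum_weighted_deviation_inner_eq_0[where S=UNIV and w="\<lambda>i. \<alpha> (c i) * \<gamma> i" and R=R]
      total_weight_pos
    by (simp add: gbar_eq_weighted_mean mult.commute)
  have cluster_cancel:
    "(\<Sum>i\<in>UNIV. (\<gamma> i * (1 - \<alpha> (c i))) * ((R$i - cbar c \<gamma> (c i) R) \<bullet> cbar c \<gamma> (c i) R)) = 0"
    using cluster_weight_pos by (intro sum_cluster_deviation_inner_eq_0) (simp add: less_imp_neq[symmetric])
  have "measure_pmf.expectation (xi_pmf p0 p)
      (\<lambda>\<xi>. (norm (\<Theta> - \<eta> *\<^sub>R Gor c f \<gamma> \<alpha> p0 p \<tau> \<Theta> \<xi> - \<Theta>hat))\<^sup>2)
    \<le> (\<Sum>i\<in>UNIV. (1 - \<eta> * \<mu>) * (norm (R$i))\<^sup>2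
      - 2 * \<eta> * ((\<gamma> i * \<alpha> (c i)) * ((R$i - gbar c \<gamma> \<alpha> R) \<bullet> gbar c \<gamma> \<alpha> R)
                 + (\<gamma> i * (1 - \<alpha> (c i))) * ((R$i - cbar c \<gamma> (c i) R) \<bullet> cbar c \<gamma> (c i) R))
      + 2 * \<eta>\<^sup>2 * client_noise i)"
  proof -
    have prob: "0 \<le> p0" "p0 \<le> 1" "\<forall>j. 0 \<le> p j \<and> p j \<le> 1"
      using p0 pj by (auto simp: less_imp_le)
    show ?thesis
      unfolding expectation_Gor_step[OF prob] R_def by (intro sum_mono client_step_le)
  qed
  also have "\<dots> = (1 - \<eta> * \<mu>) * (norm R)\<^sup>2 + 2 * \<eta>\<^sup>2 * (\<Sum>i\<in>UNIV. client_noise i)"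
    unfolding power2_norm_vec[of R] sum_distrib_left[symmetric] sum.distrib sum_subtractf
      global_cancel cluster_cancel
    by simp
  finally show ?thesis unfolding R_def sigma2_eq_sum_client_noise .
qed

end

theorem mainTheorem8:
  fixes c :: "'n::finite \<Rightarrow> 'k::finite"
    and f :: "'n \<Rightarrow> real^'d \<Rightarrow> real"
    and \<gamma> :: "'n \<Rightarrow> real" and \<alpha> :: "'k \<Rightarrow> real"
    and \<mu> L p0 \<eta> :: real and p \<tau> :: "'k \<Rightarrow> real"
    and \<Theta>0 \<Theta>hat :: "real^'d^'n"
  assumes clusters_nonempty: "surj c"
    and \<gamma>_pos: "\<forall>i. \<gamma> i > 0"
    and \<alpha>_range: "\<forall>j. 0 \<le> \<alpha> j \<and> \<alpha> j \<le> 1"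
    and \<alpha>_nonzero: "\<exists>j. \<alpha> j \<noteq> 0"
    and \<mu>L: "0 < \<mu>" "\<mu> \<le> L"
    and f_diff: "\<forall>i x. f i differentiable (at x)"
    and f_sc: "\<forall>i. strongly_convex \<mu> (f i)"
    and f_smooth: "\<forall>i. L_smooth L (f i)"
    and minimizer: "\<forall>\<Theta>. Fobj c f \<gamma> \<alpha> \<Theta>hat \<le> Fobj c f \<gamma> \<alpha> \<Theta>"
    and p0: "0 < p0" "p0 < 1"
    and pj: "\<forall>j. 0 < p j \<and> p j < 1"
    and \<tau>_def: "\<forall>j. \<tau> j = p0 / (p0 + 2 * (1 - p0) * p j)"
    and \<eta>: "0 < \<eta>" "\<eta> \<le> 1 / (2 * calL c \<gamma> \<alpha> p0 p L)"
  shows "\<forall>t::nat.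
    measure_pmf.expectation (Pi_pmf {..<t} (False, \<lambda>_. False) (\<lambda>_. xi_pmf p0 p))
      (\<lambda>xis. (norm (iter (Gor c f \<gamma> \<alpha> p0 p \<tau>) \<eta> \<Theta>0 xis t - \<Theta>hat))\<^sup>2)
    \<le> (1 - \<eta> * \<mu>) ^ t * (norm (\<Theta>0 - \<Theta>hat))\<^sup>2 + 2 * \<eta> * sigma2 c f \<gamma> \<alpha> p0 p \<Theta>hat / \<mu>"
proof
  fix t :: nat
  interpret clustered_problem c f \<gamma> \<alpha> \<mu> L p0 \<eta> p \<tau> \<Theta>hat
    by unfold_locales (fact assms)+
  let ?\<sigma> = "sigma2 c f \<gamma> \<alpha> p0 p \<Theta>hat"
  have "0 \<le> ?\<sigma>"
    unfolding sigma2_eq_sum_client_noise by (intro sum_nonneg client_noise_nonneg)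
  hence "0 \<le> 2 * \<eta> * ?\<sigma> / \<mu>" using \<eta>(1) \<mu>L(1) by simp
  moreover have "(1 - \<eta> * \<mu>) * (2 * \<eta> * ?\<sigma> / \<mu>) + 2 * \<eta>\<^sup>2 * ?\<sigma> = 2 * \<eta> * ?\<sigma> / \<mu>"
    using \<mu>L(1) by (simp add: field_simps power2_eq_square)
  ultimately show "measure_pmf.expectation (Pi_pmf {..<t} (False, \<lambda>_. False) (\<lambda>_. xi_pmf p0 p))
      (\<lambda>xis. (norm (iter (Gor c f \<gamma> \<alpha> p0 p \<tau>) \<eta> \<Theta>0 xis t - \<Theta>hat))\<^sup>2)
    \<le> (1 - \<eta> * \<mu>) ^ t * (norm (\<Theta>0 - \<Theta>hat))\<^sup>2 + 2 * \<eta> * ?\<sigma> / \<mu>"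
    using step_size_mu_le_half
    by (intro expectation_iter_le[OF finite_set_xi_pmf expected_step_le]) auto
qed

end
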